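(* Let $R$ be a ring with identity. The following are equivalent: (1) $R$ is semisimple; (2) $\mathbb{CFM}_\Lambda(R)$ is SSP for a countably infinite set $\Lambda$; (3) $\mathbb{CFM}_\Lambda(R)$ is SSP for some infinite set $\Lambda$; (4) $\mathbb{CFM}_\Lambda(R)$ is SSP for every infinite set $\Lambda$.
   Context: Rings are associative with identity. For an infinite set $\Lambda$, $\mathbb{CFM}_\Lambda(R)$ denotes the ring of column finite $\Lambda\times\Lambda$ matrices over $R$ (matrices with entries in $R$, rows and columns indexed by $\Lambda$, each column having only finitely many nonzero entries), with the usual matrix operations. A ring $S$ is right SSP if the sum of any two direct summands of $S_S$ is again a direct summand of $S_S$; left SSP analogously with ${}_SS$; $S$ is SSP if it is both right and left SSP. *)

theory Defs
  imports Main
begin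

definition right_ideal_in ::
  "'b set \<Rightarrow> ('b \<Rightarrow> 'b \<Rightarrow> 'b) \<Rightarrow> 'b \<Rightarrow> ('b \<Rightarrow> 'b \<Rightarrow> 'b) \<Rightarrow> 'b set \<Rightarrow> bool" where
  "right_ideal_in C add z mult I \<longleftrightarrow>
     I \<subseteq> C \<and> z \<in> I \<and> (\<forall>x\<in>I. \<forall>y\<in>I. add x y \<in> I) \<and> (\<forall>x\<in>I. \<forall>r\<in>C. mult x r \<in> I)"

definition set_plus_in :: "('b \<Rightarrow> 'b \<Rightarrow> 'b) \<Rightarrow> 'b set \<Rightarrow> 'b set \<Rightarrow> 'b set" where
  "set_plus_in add A B = {add a b | a b. a \<in> A \<and> b \<in> B}"

definition right_summand_in ::
  "'b set \<Rightarrow> ('b \<Rightarrow> 'b \<Rightarrow> 'b) \<Rightarrow> 'b \<Rightarrow> ('b \<Rightarrow> 'b \<Rightarrow> 'b) \<Rightarrow> 'b set \<Rightarrow> bool" where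
  "right_summand_in C add z mult A \<longleftrightarrow>
     right_ideal_in C add z mult A \<and>
     (\<exists>B. right_ideal_in C add z mult B \<and> A \<inter> B = {z} \<and> set_plus_in add A B = C)"

definition right_SSP_in ::
  "'b set \<Rightarrow> ('b \<Rightarrow> 'b \<Rightarrow> 'b) \<Rightarrow> 'b \<Rightarrow> ('b \<Rightarrow> 'b \<Rightarrow> 'b) \<Rightarrow> bool" where
  "right_SSP_in C add z mult \<longleftrightarrow>
     (\<forall>A B. right_summand_in C add z mult A \<and> right_summand_in C add z mult B
        \<longrightarrow> right_summand_in C add z mult (set_plus_in add A B))"

definition left_SSP_in ::
  "'b set \<Rightarrow> ('b \<Rightarrow> 'b \<Rightarrow> 'b) \<Rightarrow> 'b \<Rightarrow> ('b \<Rightarrow> 'b \<Rightarrow> 'b) \<Rightarrow> bool" where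
  "left_SSP_in C add z mult \<longleftrightarrow> right_SSP_in C add z (\<lambda>x y. mult y x)"

definition SSP_in ::
  "'b set \<Rightarrow> ('b \<Rightarrow> 'b \<Rightarrow> 'b) \<Rightarrow> 'b \<Rightarrow> ('b \<Rightarrow> 'b \<Rightarrow> 'b) \<Rightarrow> bool" where
  "SSP_in C add z mult \<longleftrightarrow> right_SSP_in C add z mult \<and> left_SSP_in C add z mult"

definition right_ideal :: "'a::ring_1 set \<Rightarrow> bool" where
  "right_ideal I \<longleftrightarrow> right_ideal_in UNIV (+) 0 (*) I"

definition minimal_right_ideal :: "'a::ring_1 set \<Rightarrow> bool" where
  "minimal_right_ideal I \<longleftrightarrow> right_ideal I \<and> I \<noteq> {0} \<and>
     (\<forall>J. right_ideal J \<and> J \<subseteq> I \<longrightarrow> J = {0} \<or> J = I)"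

definition semisimple_ring :: "'a::ring_1 itself \<Rightarrow> bool" where
  "semisimple_ring _ \<longleftrightarrow>
     (\<forall>x::'a. \<exists>F f. finite F \<and> (\<forall>I\<in>F. minimal_right_ideal I \<and> f I \<in> I) \<and>
        x = (\<Sum>I\<in>F. f I))"

definition cfm :: "'l set \<Rightarrow> ('l \<Rightarrow> 'l \<Rightarrow> 'a::zero) set" where
  "cfm \<Lambda> = {M. (\<forall>i j. (i \<notin> \<Lambda> \<or> j \<notin> \<Lambda>) \<longrightarrow> M i j = 0) \<and>
                (\<forall>j\<in>\<Lambda>. finite {i\<in>\<Lambda>. M i j \<noteq> 0})}"

definition cfm_add :: "('l \<Rightarrow> 'l \<Rightarrow> 'a::ring_1) \<Rightarrow> ('l \<Rightarrow> 'l \<Rightarrow> 'a) \<Rightarrow> ('l \<Rightarrow> 'l \<Rightarrow> 'a)" where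
  "cfm_add M N = (\<lambda>i j. M i j + N i j)"

definition cfm_zero :: "'l \<Rightarrow> 'l \<Rightarrow> 'a::ring_1" where
  "cfm_zero = (\<lambda>i j. 0)"

text \<open>Product: the sum over j ranges over the finitely many j with N j k nonzero.\<close>
definition cfm_mult :: "'l set \<Rightarrow> ('l \<Rightarrow> 'l \<Rightarrow> 'a::ring_1) \<Rightarrow> ('l \<Rightarrow> 'l \<Rightarrow> 'a) \<Rightarrow> ('l \<Rightarrow> 'l \<Rightarrow> 'a)" where
  "cfm_mult \<Lambda> M N = (\<lambda>i k. \<Sum>j\<in>{j\<in>\<Lambda>. N j k \<noteq> 0}. M i j * N j k)"

definition CFM_SSP :: "'a::ring_1 itself \<Rightarrow> 'l set \<Rightarrow> bool" where
  "CFM_SSP _ \<Lambda> \<longleftrightarrow> SSP_in (cfm \<Lambda> :: ('l \<Rightarrow> 'l \<Rightarrow> 'a) set) cfm_add cfm_zero (cfm_mult \<Lambda>)"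

end

theory Submission
  imports Defs "HOL-Library.Function_Algebras"
begin

text \<open>If R is semisimple, every submodule of the free module R^(\<Lambda>) is a direct summand. Applied
  to the column space of a column finite matrix a this yields b with a b a = a, so CFM(R) is von
  Neumann regular, and regular rings are SSP on both sides: for idempotents e, f the sum eS + fS
  equals eS + gS with g an idempotent satisfying e g = 0, and this is generated by the idempotent
  e + g (1 - e).

  Conversely, let CFM(R) be left SSP for an infinite \<Lambda>. Writing a sequence x_0, x_1, ... of R into
  one row of a matrix and using two left summands of matrices whose columns are fixed multiples of
  one column, a right unit of their sum gives a finite combination e = \<Sigma> x_k r_k with e x_m = x_m
  for all m: every countably generated right ideal of R is a direct summand. This excludes infinite
  descending chains of idempotents, so every nonzero principal right ideal contains a minimal one,
  and a greedy sequence of generators of minimal right ideals shows that 1 lies in the sum of the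
  minimal right ideals.\<close>

section \<open>Rings on a carrier: direct summands and regularity\<close>

text \<open>The carrier C is a subset of an additive group whose addition is inherited; only the
  multiplication is new. This is how CFM(R) sits inside the functions \<Lambda> \<times> \<Lambda> \<rightarrow> R.\<close>
locale ring_on =
  fixes C :: "'b::ab_group_add set" and mult :: "'b \<Rightarrow> 'b \<Rightarrow> 'b" (infixl "\<star>" 70) and one :: 'b
  assumes zero_closed: "0 \<in> C" and one_closed: "one \<in> C"
    and add_closed: "x \<in> C \<Longrightarrow> y \<in> C \<Longrightarrow> x + y \<in> C"
    and uminus_closed: "x \<in> C \<Longrightarrow> - x \<in> C"
    and m_closed: "x \<in> C \<Longrightarrow> y \<in> C \<Longrightarrow> x \<star> y \<in> C"
    and m_assoc: "x \<in> C \<Longrightarrow> y \<in> C \<Longrightarrow> z \<in> C \<Longrightarrow> (x \<star> y) \<star> z = x \<star> (y \<star> z)"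
    and r_distr: "x \<in> C \<Longrightarrow> y \<in> C \<Longrightarrow> z \<in> C \<Longrightarrow> z \<star> (x + y) = z \<star> x + z \<star> y"
    and l_distr: "x \<in> C \<Longrightarrow> y \<in> C \<Longrightarrow> z \<in> C \<Longrightarrow> (x + y) \<star> z = x \<star> z + y \<star> z"
    and l_one: "x \<in> C \<Longrightarrow> one \<star> x = x"
    and r_one: "x \<in> C \<Longrightarrow> x \<star> one = x"
begin

lemma diff_closed: "x \<in> C \<Longrightarrow> y \<in> C \<Longrightarrow> x - y \<in> C"
  using add_closed uminus_closed by (metis diff_conv_add_uminus)

lemma r_null: "x \<in> C \<Longrightarrow> x \<star> 0 = 0"
  using r_distr[of 0 0 x] zero_closed by simp

lemma l_null: "x \<in> C \<Longrightarrow> 0 \<star> x = 0"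
  using l_distr[of 0 0 x] zero_closed by simp

lemma r_minus: "x \<in> C \<Longrightarrow> y \<in> C \<Longrightarrow> x \<star> (- y) = - (x \<star> y)"
  using r_distr[of y "- y" x] uminus_closed r_null by (simp add: add.inverse_unique)

lemma l_minus: "x \<in> C \<Longrightarrow> y \<in> C \<Longrightarrow> (- x) \<star> y = - (x \<star> y)"
  using l_distr[of x "- x" y] uminus_closed l_null by (simp add: add.inverse_unique)

lemma r_diff: "x \<in> C \<Longrightarrow> y \<in> C \<Longrightarrow> z \<in> C \<Longrightarrow> z \<star> (x - y) = z \<star> x - z \<star> y"
  using r_distr[of x "- y" z] uminus_closed r_minus by simp

lemma l_diff: "x \<in> C \<Longrightarrow> y \<in> C \<Longrightarrow> z \<in> C \<Longrightarrow> (x - y) \<star> z = x \<star> z - y \<star> z"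
  using l_distr[of x "- y" z] uminus_closed l_minus by simp

lemmas closed = zero_closed one_closed add_closed uminus_closed m_closed diff_closed

lemma opposite: "ring_on C (\<lambda>x y. y \<star> x) one"
  by unfold_locales (auto simp: closed m_assoc r_distr l_distr l_one r_one)

definition principal_right_ideal :: "'b \<Rightarrow> 'b set" where
  "principal_right_ideal e = (\<star>) e ` C"

definition vn_regular :: bool where
  "vn_regular \<longleftrightarrow> (\<forall>a\<in>C. \<exists>b\<in>C. a \<star> b \<star> a = a)"

lemma right_ideal_principal: "e \<in> C \<Longrightarrow> right_ideal_in C (+) 0 (\<star>) (principal_right_ideal e)"
  unfolding right_ideal_in_def principal_right_ideal_def
  by (auto simp: closed m_assoc image_iff simp flip: r_distr) (metis r_null zero_closed)

lemma right_ideal_diff: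
  assumes I: "right_ideal_in C (+) 0 (\<star>) I" and "x \<in> I" "y \<in> I"
  shows "x - y \<in> I"
proof -
  have "y \<in> C" using I \<open>y \<in> I\<close> unfolding right_ideal_in_def by blast
  then have "y \<star> (- one) = - y" using r_minus r_one one_closed by simp
  moreover have "y \<star> (- one) \<in> I"
    using I \<open>y \<in> I\<close> one_closed uminus_closed unfolding right_ideal_in_def by blast
  ultimately have "- y \<in> I" by simp
  then show ?thesis using I \<open>x \<in> I\<close> unfolding right_ideal_in_def diff_conv_add_uminus by blast
qed

lemma right_summand_imp_idempotent:
  assumes "right_summand_in C (+) 0 (\<star>) A"
  obtains e where "e \<in> C" "e \<star> e = e" "A = principal_right_ideal e"
proof -
  from assms obtain B where A: "right_ideal_in C (+) 0 (\<star>) A" and B: "right_ideal_in C (+) 0 (\<star>) B"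
    and AB: "A \<inter> B = {0}" and S: "set_plus_in (+) A B = C"
    unfolding right_summand_in_def by blast
  from S one_closed obtain e e' where e: "e \<in> A" and e': "e' \<in> B" and one: "one = e + e'"
    unfolding set_plus_in_def by blast
  have AC: "A \<subseteq> C" and BC: "B \<subseteq> C" using A B unfolding right_ideal_in_def by auto
  have left_unit: "e \<star> a = a" if a: "a \<in> A" for a
  proof -
    have aC: "a \<in> C" using a AC by auto
    have dec: "a = e \<star> a + e' \<star> a" using l_one[OF aC] l_distr[of e e' a] e e' AC BC aC one by auto
    have "e' \<star> a \<in> B" using B e' aC unfolding right_ideal_in_def by auto
    moreover have "e' \<star> a = a - e \<star> a" using dec by (simp add: algebra_simps)
    then have "e' \<star> a \<in> A" using right_ideal_diff[OF A a] A e aC unfolding right_ideal_in_def by auto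
    ultimately have "e' \<star> a = 0" using AB by auto
    then show ?thesis using dec by simp
  qed
  have "A = principal_right_ideal e"
  proof
    show "A \<subseteq> principal_right_ideal e" unfolding principal_right_ideal_def using left_unit AC by force
    show "principal_right_ideal e \<subseteq> A"
      unfolding principal_right_ideal_def using A e unfolding right_ideal_in_def by auto
  qed
  moreover have "e \<in> C" using e AC by auto
  ultimately show thesis using that left_unit[OF e] by blast
qed

lemma idempotent_right_summand:
  assumes e: "e \<in> C" and ee: "e \<star> e = e"
  shows "right_summand_in C (+) 0 (\<star>) (principal_right_ideal e)"
proof -
  have f: "one - e \<in> C" using e by (simp add: closed)
  have I1: "right_ideal_in C (+) 0 (\<star>) (principal_right_ideal e)"
    and I2: "right_ideal_in C (+) 0 (\<star>) (principal_right_ideal (one - e))"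
    using right_ideal_principal e f by auto
  have "x = 0" if x: "x \<in> principal_right_ideal e" "x \<in> principal_right_ideal (one - e)" for x
  proof -
    obtain s t where s: "s \<in> C" "x = e \<star> s" and t: "t \<in> C" "x = (one - e) \<star> t"
      using x unfolding principal_right_ideal_def by blast
    have "e \<star> x = x" using s m_assoc[of e e s] e ee by simp
    moreover have "e \<star> (one - e) = 0" using r_diff[of one e e] e one_closed r_one ee by simp
    then have "e \<star> x = 0" using t m_assoc[of e "one - e" t] e f l_null by simp
    ultimately show ?thesis by simp
  qed
  then have "principal_right_ideal e \<inter> principal_right_ideal (one - e) = {0}"
    using I1 I2 unfolding right_ideal_in_def by blast
  moreover have "set_plus_in (+) (principal_right_ideal e) (principal_right_ideal (one - e)) = C"
  proof (intro equalityI subsetI)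
    fix x assume "x \<in> set_plus_in (+) (principal_right_ideal e) (principal_right_ideal (one - e))"
    then obtain u v where "u \<in> principal_right_ideal e" "v \<in> principal_right_ideal (one - e)" "x = u + v"
      unfolding set_plus_in_def by blast
    moreover have "principal_right_ideal e \<subseteq> C" "principal_right_ideal (one - e) \<subseteq> C"
      using I1 I2 unfolding right_ideal_in_def by auto
    ultimately show "x \<in> C" using add_closed by blast
  next
    fix x assume x: "x \<in> C"
    have "x = e \<star> x + (one - e) \<star> x" using l_diff[of one e x] one_closed e x l_one by simp
    then show "x \<in> set_plus_in (+) (principal_right_ideal e) (principal_right_ideal (one - e))"
      unfolding set_plus_in_def principal_right_ideal_def using x by blast
  qed
  ultimately show ?thesis unfolding right_summand_in_def using I1 I2 by blast
qed

lemma right_summand_left_unit: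
  assumes "right_summand_in C (+) 0 (\<star>) A"
  obtains e where "e \<in> A" "\<And>a. a \<in> A \<Longrightarrow> e \<star> a = a"
proof -
  obtain e where e: "e \<in> C" "e \<star> e = e" and A: "A = principal_right_ideal e"
    using right_summand_imp_idempotent[OF assms] by blast
  have "e \<in> A" unfolding A principal_right_ideal_def using e(1) r_one one_closed by (metis image_eqI)
  moreover have "e \<star> a = a" if "a \<in> A" for a
    using that e unfolding A principal_right_ideal_def by (auto simp flip: m_assoc)
  ultimately show thesis using that by blast
qed

lemma principal_sum_orthogonalize:
  assumes e: "e \<in> C" and f: "f \<in> C"
  shows "set_plus_in (+) (principal_right_ideal e) (principal_right_ideal f)
       = set_plus_in (+) (principal_right_ideal e) (principal_right_ideal ((one - e) \<star> f))"
proof (intro equalityI subsetI)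
  fix x assume "x \<in> set_plus_in (+) (principal_right_ideal e) (principal_right_ideal f)"
  then obtain s t where st: "s \<in> C" "t \<in> C" and x: "x = e \<star> s + f \<star> t"
    unfolding set_plus_in_def principal_right_ideal_def by blast
  have "x = e \<star> (s + f \<star> t) + ((one - e) \<star> f) \<star> t"
    using e f st by (simp add: x r_distr l_diff l_one m_assoc closed)
  then show "x \<in> set_plus_in (+) (principal_right_ideal e) (principal_right_ideal ((one - e) \<star> f))"
    unfolding set_plus_in_def principal_right_ideal_def using e f st by (blast intro: closed)
next
  fix x assume "x \<in> set_plus_in (+) (principal_right_ideal e) (principal_right_ideal ((one - e) \<star> f))"
  then obtain s t where st: "s \<in> C" "t \<in> C" and x: "x = e \<star> s + ((one - e) \<star> f) \<star> t"
    unfolding set_plus_in_def principal_right_ideal_def by blast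
  have "x = e \<star> (s - f \<star> t) + f \<star> t"
    using e f st by (simp add: x r_diff l_diff l_one m_assoc closed)
  then show "x \<in> set_plus_in (+) (principal_right_ideal e) (principal_right_ideal f)"
    unfolding set_plus_in_def principal_right_ideal_def using e f st by (blast intro: closed)
qed

lemma principal_regular_idempotent:
  assumes a: "a \<in> C" and b: "b \<in> C" and aba: "a \<star> b \<star> a = a"
  shows "(a \<star> b) \<star> (a \<star> b) = a \<star> b"
    and "principal_right_ideal (a \<star> b) = principal_right_ideal a"
proof -
  show "(a \<star> b) \<star> (a \<star> b) = a \<star> b"
    using a b aba by (simp flip: m_assoc add: closed)
  show "principal_right_ideal (a \<star> b) = principal_right_ideal a"
  proof (intro equalityI subsetI)
    fix x assume "x \<in> principal_right_ideal (a \<star> b)"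
    then obtain s where "s \<in> C" "x = a \<star> (b \<star> s)"
      unfolding principal_right_ideal_def using a b m_assoc by blast
    then show "x \<in> principal_right_ideal a" unfolding principal_right_ideal_def using b m_closed by blast
  next
    fix x assume "x \<in> principal_right_ideal a"
    then obtain s where s: "s \<in> C" "x = a \<star> s" unfolding principal_right_ideal_def by blast
    then have "x = (a \<star> b) \<star> (a \<star> s)" using a b aba by (simp flip: m_assoc add: closed)
    then show "x \<in> principal_right_ideal (a \<star> b)" unfolding principal_right_ideal_def using a s m_closed by blast
  qed
qed

text \<open>For orthogonal idempotents (e g = 0) the sum e + g need not be idempotent; the correction
  e + g (1 - e) is, and it still generates eC + gC.\<close>
lemma principal_sum_idempotents:
  assumes e: "e \<in> C" "e \<star> e = e" and g: "g \<in> C" "g \<star> g = g" and eg: "e \<star> g = 0"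
  defines "h \<equiv> e + g \<star> (one - e)"
  shows "h \<in> C" and "h \<star> h = h"
    and "principal_right_ideal h = set_plus_in (+) (principal_right_ideal e) (principal_right_ideal g)"
proof -
  show hC: "h \<in> C" unfolding h_def using e g by (simp add: closed)
  have he: "h \<star> e = e" unfolding h_def using e g by (simp add: l_distr l_diff r_diff m_assoc l_one r_null closed)
  have hg: "h \<star> g = g" unfolding h_def using e g eg
    by (simp add: l_distr l_diff r_diff m_assoc l_one r_null closed)
  have he': "h \<star> (e \<star> s) = e \<star> s" and hg': "h \<star> (g \<star> s) = g \<star> s" if "s \<in> C" for s
    using he hg hC e g that by (simp_all flip: m_assoc)
  have "h \<star> h = h \<star> e + h \<star> (g \<star> (one - e))"
    using r_distr[of e "g \<star> (one - e)" h] hC e g by (simp add: closed flip: h_def)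
  then show "h \<star> h = h" using he hg'[of "one - e"] e by (simp add: closed h_def)
  show "principal_right_ideal h = set_plus_in (+) (principal_right_ideal e) (principal_right_ideal g)"
  proof (intro equalityI subsetI)
    fix x assume "x \<in> principal_right_ideal h"
    then obtain s where s: "s \<in> C" and x: "x = h \<star> s" unfolding principal_right_ideal_def by blast
    have "x = e \<star> s + g \<star> ((one - e) \<star> s)" unfolding x h_def using e g s by (simp add: l_distr m_assoc closed)
    then show "x \<in> set_plus_in (+) (principal_right_ideal e) (principal_right_ideal g)"
      unfolding set_plus_in_def principal_right_ideal_def using e g s by (blast intro: closed)
  next
    fix x assume "x \<in> set_plus_in (+) (principal_right_ideal e) (principal_right_ideal g)"
    then obtain s t where st: "s \<in> C" "t \<in> C" and x: "x = e \<star> s + g \<star> t"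
      unfolding set_plus_in_def principal_right_ideal_def by blast
    have "x = h \<star> (e \<star> s + g \<star> t)" using he' hg' st hC e g by (simp add: x r_distr closed)
    then show "x \<in> principal_right_ideal h"
      unfolding principal_right_ideal_def using e g st by (blast intro: closed)
  qed
qed

lemma vn_regular_imp_right_SSP:
  assumes vn_regular
  shows "right_SSP_in C (+) 0 (\<star>)"
  unfolding right_SSP_in_def
proof (intro allI impI, elim conjE)
  fix A B assume "right_summand_in C (+) 0 (\<star>) A" "right_summand_in C (+) 0 (\<star>) B"
  then obtain e f where e: "e \<in> C" "e \<star> e = e" "A = principal_right_ideal e"
    and f: "f \<in> C" "f \<star> f = f" "B = principal_right_ideal f"
    by (metis right_summand_imp_idempotent)
  define a where "a = (one - e) \<star> f"
  have a: "a \<in> C" unfolding a_def using e f by (simp add: closed)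
  obtain b where b: "b \<in> C" "a \<star> b \<star> a = a" using \<open>vn_regular\<close> a unfolding vn_regular_def by blast
  have ab: "a \<star> b \<in> C" using a b by (simp add: closed)
  have "e \<star> (a \<star> b) = 0" unfolding a_def
    using e f b by (simp add: r_diff r_one l_null m_assoc closed flip: m_assoc[of e])
  note h = principal_sum_idempotents[OF e(1,2) ab principal_regular_idempotent(1)[OF a b] this]
  have "set_plus_in (+) A B = principal_right_ideal (e + (a \<star> b) \<star> (one - e))"
    using principal_sum_orthogonalize[OF e(1) f(1)] principal_regular_idempotent(2)[OF a b] h(3)
    by (simp add: e(3) f(3) a_def)
  then show "right_summand_in C (+) 0 (\<star>) (set_plus_in (+) A B)"
    using idempotent_right_summand[OF h(1,2)] by simp
qed

lemma vn_regular_opposite: "vn_regular \<Longrightarrow> ring_on.vn_regular C (\<lambda>x y. y \<star> x)"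
  unfolding vn_regular_def ring_on.vn_regular_def[OF opposite] by (metis m_assoc m_closed)

lemma vn_regular_imp_SSP: "vn_regular \<Longrightarrow> SSP_in C (+) 0 (\<star>)"
  unfolding SSP_in_def left_SSP_in_def
  using vn_regular_imp_right_SSP ring_on.vn_regular_imp_right_SSP[OF opposite] vn_regular_opposite
  by blast

end

section \<open>The ring of column finite matrices\<close>

definition cfm_one :: "'l set \<Rightarrow> 'l \<Rightarrow> 'l \<Rightarrow> 'a::ring_1" where
  "cfm_one \<Lambda> = (\<lambda>i j. if i = j \<and> i \<in> \<Lambda> then 1 else 0)"

lemma cfm_outside: "M \<in> cfm \<Lambda> \<Longrightarrow> i \<notin> \<Lambda> \<or> j \<notin> \<Lambda> \<Longrightarrow> M i j = 0"
  unfolding cfm_def by auto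

lemma cfm_finite_column: "M \<in> cfm \<Lambda> \<Longrightarrow> finite {i\<in>\<Lambda>. M i j \<noteq> 0}"
  unfolding cfm_def by (cases "j \<in> \<Lambda>") auto

lemma cfmI:
  "(\<And>i j. i \<notin> \<Lambda> \<or> j \<notin> \<Lambda> \<Longrightarrow> M i j = 0) \<Longrightarrow> (\<And>j. j \<in> \<Lambda> \<Longrightarrow> finite {i\<in>\<Lambda>. M i j \<noteq> 0})
   \<Longrightarrow> M \<in> cfm \<Lambda>"
  unfolding cfm_def by auto

lemma cfm_mult_eq_sum:
  assumes N: "N \<in> cfm \<Lambda>" and J: "finite J" "{j\<in>\<Lambda>. N j k \<noteq> 0} \<subseteq> J"
  shows "cfm_mult \<Lambda> M N i k = (\<Sum>j\<in>J. M i j * N j k)"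
  unfolding cfm_mult_def
proof (rule sum.mono_neutral_left[OF J], intro ballI)
  fix j assume "j \<in> J - {j\<in>\<Lambda>. N j k \<noteq> 0}"
  then have "N j k = 0" using cfm_outside[OF N, of j k] by auto
  then show "M i j * N j k = 0" by simp
qed

lemma cfm_mult_closed:
  assumes M: "M \<in> cfm \<Lambda>" and N: "N \<in> cfm \<Lambda>"
  shows "cfm_mult \<Lambda> M N \<in> cfm \<Lambda>"
proof (rule cfmI)
  fix i k assume "i \<notin> \<Lambda> \<or> k \<notin> \<Lambda>"
  then show "cfm_mult \<Lambda> M N i k = 0"
    unfolding cfm_mult_def using cfm_outside[OF M] cfm_outside[OF N] by (auto intro: sum.neutral)
next
  fix k
  let ?S = "{j\<in>\<Lambda>. N j k \<noteq> 0}"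
  have "{i\<in>\<Lambda>. cfm_mult \<Lambda> M N i k \<noteq> 0} \<subseteq> (\<Union>j\<in>?S. {i\<in>\<Lambda>. M i j \<noteq> 0})"
  proof
    fix i assume "i \<in> {i\<in>\<Lambda>. cfm_mult \<Lambda> M N i k \<noteq> 0}"
    then obtain j where "i \<in> \<Lambda>" "j \<in> ?S" "M i j * N j k \<noteq> 0"
      unfolding cfm_mult_def by (auto elim: sum.not_neutral_contains_not_neutral)
    then show "i \<in> (\<Union>j\<in>?S. {i\<in>\<Lambda>. M i j \<noteq> 0})" by auto
  qed
  moreover have "finite (\<Union>j\<in>?S. {i\<in>\<Lambda>. M i j \<noteq> 0})"
    using cfm_finite_column[OF M] cfm_finite_column[OF N] by auto
  ultimately show "finite {i\<in>\<Lambda>. cfm_mult \<Lambda> M N i k \<noteq> 0}" by (rule finite_subset)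
qed

lemma cfm_add_closed: "(M :: 'l \<Rightarrow> 'l \<Rightarrow> 'a::ring_1) \<in> cfm \<Lambda> \<Longrightarrow> N \<in> cfm \<Lambda> \<Longrightarrow> M + N \<in> cfm \<Lambda>"
proof (rule cfmI)
  fix j assume M: "M \<in> cfm \<Lambda>" and N: "N \<in> cfm \<Lambda>"
  have "{i\<in>\<Lambda>. (M + N) i j \<noteq> 0} \<subseteq> {i\<in>\<Lambda>. M i j \<noteq> 0} \<union> {i\<in>\<Lambda>. N i j \<noteq> 0}" by auto
  then show "finite {i\<in>\<Lambda>. (M + N) i j \<noteq> 0}"
    using cfm_finite_column[OF M] cfm_finite_column[OF N] by (meson finite_UnI finite_subset)
qed (simp add: cfm_outside)

lemma cfm_uminus_closed: "(M :: 'l \<Rightarrow> 'l \<Rightarrow> 'a::ring_1) \<in> cfm \<Lambda> \<Longrightarrow> - M \<in> cfm \<Lambda>"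
  using cfm_outside[of M \<Lambda>] cfm_finite_column[of M \<Lambda>] by (intro cfmI) auto

lemma cfm_zero_closed: "(0 :: 'l \<Rightarrow> 'l \<Rightarrow> 'a::ring_1) \<in> cfm \<Lambda>"
  by (intro cfmI) auto

lemma cfm_one_closed: "(cfm_one \<Lambda> :: 'l \<Rightarrow> 'l \<Rightarrow> 'a::ring_1) \<in> cfm \<Lambda>"
proof (rule cfmI)
  fix j
  have "{i\<in>\<Lambda>. cfm_one \<Lambda> i j \<noteq> (0::'a)} \<subseteq> {j}" by (auto simp: cfm_one_def)
  then show "finite {i\<in>\<Lambda>. cfm_one \<Lambda> i j \<noteq> (0::'a)}" by (rule finite_subset) auto
qed (auto simp: cfm_one_def)

lemma cfm_mult_assoc:
  assumes M: "M \<in> cfm \<Lambda>" and N: "N \<in> cfm \<Lambda>" and P: "P \<in> cfm \<Lambda>"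
  shows "cfm_mult \<Lambda> (cfm_mult \<Lambda> M N) P = cfm_mult \<Lambda> M (cfm_mult \<Lambda> N P)"
proof (intro ext)
  fix i l
  define K where "K = {k\<in>\<Lambda>. P k l \<noteq> 0}"
  define J where "J = (\<Union>k\<in>K. {j\<in>\<Lambda>. N j k \<noteq> 0})"
  have fK: "finite K" using cfm_finite_column[OF P] K_def by simp
  have fJ: "finite J" using fK cfm_finite_column[OF N] J_def by auto
  have NP_supp: "{j\<in>\<Lambda>. cfm_mult \<Lambda> N P j l \<noteq> 0} \<subseteq> J"
  proof
    fix j assume "j \<in> {j\<in>\<Lambda>. cfm_mult \<Lambda> N P j l \<noteq> 0}"
    then obtain k where "j \<in> \<Lambda>" "k \<in> K" "N j k * P k l \<noteq> 0"
      unfolding cfm_mult_def K_def by (auto elim: sum.not_neutral_contains_not_neutral)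
    then show "j \<in> J" unfolding J_def by fastforce
  qed
  have "cfm_mult \<Lambda> (cfm_mult \<Lambda> M N) P i l = (\<Sum>k\<in>K. (\<Sum>j\<in>J. M i j * N j k) * P k l)"
    unfolding cfm_mult_def[of \<Lambda> "cfm_mult \<Lambda> M N"] K_def[symmetric]
    by (intro sum.cong refl arg_cong2[where f = "(*)"] cfm_mult_eq_sum[OF N fJ])
      (auto simp: J_def)
  also have "\<dots> = (\<Sum>j\<in>J. M i j * (\<Sum>k\<in>K. N j k * P k l))"
    by (simp add: sum_distrib_left sum_distrib_right mult.assoc sum.swap[of _ K])
  also have "\<dots> = cfm_mult \<Lambda> M (cfm_mult \<Lambda> N P) i l"
    using cfm_mult_eq_sum[OF cfm_mult_closed[OF N P] fJ NP_supp] by (simp add: cfm_mult_def K_def)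
  finally show "cfm_mult \<Lambda> (cfm_mult \<Lambda> M N) P i l = cfm_mult \<Lambda> M (cfm_mult \<Lambda> N P) i l" .
qed

lemma cfm_distrib_left:
  assumes M: "M \<in> cfm \<Lambda>" and N: "N \<in> cfm \<Lambda>" and P: "P \<in> cfm \<Lambda>"
  shows "cfm_mult \<Lambda> M (N + P) = cfm_mult \<Lambda> M N + cfm_mult \<Lambda> M P"
proof (intro ext)
  fix i k
  define J where "J = {j\<in>\<Lambda>. N j k \<noteq> 0} \<union> {j\<in>\<Lambda>. P j k \<noteq> 0}"
  have fJ: "finite J" using cfm_finite_column[OF N] cfm_finite_column[OF P] J_def by auto
  have "cfm_mult \<Lambda> M (N + P) i k = (\<Sum>j\<in>J. M i j * (N + P) j k)"
    by (rule cfm_mult_eq_sum[OF cfm_add_closed[OF N P] fJ]) (auto simp: J_def)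
  also have "\<dots> = (\<Sum>j\<in>J. M i j * N j k) + (\<Sum>j\<in>J. M i j * P j k)"
    by (simp add: distrib_left sum.distrib)
  also have "\<dots> = cfm_mult \<Lambda> M N i k + cfm_mult \<Lambda> M P i k"
    using cfm_mult_eq_sum[OF N fJ, of k M i] cfm_mult_eq_sum[OF P fJ, of k M i] J_def by auto
  finally show "cfm_mult \<Lambda> M (N + P) i k = (cfm_mult \<Lambda> M N + cfm_mult \<Lambda> M P) i k" by simp
qed

lemma cfm_distrib_right: "cfm_mult \<Lambda> (M + N) P = cfm_mult \<Lambda> M P + cfm_mult \<Lambda> N P"
  by (intro ext) (simp add: cfm_mult_def distrib_right sum.distrib)

lemma cfm_mult_one_left: "M \<in> cfm \<Lambda> \<Longrightarrow> cfm_mult \<Lambda> (cfm_one \<Lambda>) M = M"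
proof (intro ext)
  fix i k assume M: "M \<in> cfm \<Lambda>"
  let ?S = "{j\<in>\<Lambda>. M j k \<noteq> 0}"
  have "cfm_mult \<Lambda> (cfm_one \<Lambda>) M i k = (\<Sum>j\<in>?S. if j = i then M i k else 0)"
    unfolding cfm_mult_def cfm_one_def by (rule sum.cong) auto
  also have "\<dots> = M i k" using cfm_finite_column[OF M] cfm_outside[OF M, of i k] by (auto simp: sum.delta')
  finally show "cfm_mult \<Lambda> (cfm_one \<Lambda>) M i k = M i k" .
qed

lemma cfm_mult_one_right: "(M :: 'l \<Rightarrow> 'l \<Rightarrow> 'a::ring_1) \<in> cfm \<Lambda> \<Longrightarrow> cfm_mult \<Lambda> M (cfm_one \<Lambda>) = M"
proof (intro ext)
  fix i k assume M: "M \<in> cfm \<Lambda>"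
  have "{j\<in>\<Lambda>. cfm_one \<Lambda> j k \<noteq> (0::'a)} = (if k \<in> \<Lambda> then {k} else {})" by (auto simp: cfm_one_def)
  then show "cfm_mult \<Lambda> M (cfm_one \<Lambda>) i k = M i k"
    using cfm_outside[OF M, of i k] by (auto simp: cfm_mult_def cfm_one_def)
qed

lemma ring_on_cfm: "ring_on (cfm \<Lambda> :: ('l \<Rightarrow> 'l \<Rightarrow> 'a::ring_1) set) (cfm_mult \<Lambda>) (cfm_one \<Lambda>)"
  by unfold_locales (auto simp: cfm_zero_closed cfm_one_closed cfm_add_closed cfm_uminus_closed
      cfm_mult_closed cfm_mult_assoc cfm_distrib_left cfm_distrib_right cfm_mult_one_left cfm_mult_one_right)

lemma cfm_add_eq: "cfm_add = (+)"
  by (intro ext) (simp add: cfm_add_def)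

lemma cfm_zero_eq: "cfm_zero = 0"
  by (intro ext) (simp add: cfm_zero_def)

section \<open>Complements in the free module over a semisimple ring\<close>

definition fin_vecs :: "'l set \<Rightarrow> ('l \<Rightarrow> 'a::ring_1) set" where
  "fin_vecs \<Lambda> = {v. (\<forall>i. i \<notin> \<Lambda> \<longrightarrow> v i = 0) \<and> finite {i. v i \<noteq> 0}}"

definition submodule :: "'l set \<Rightarrow> ('l \<Rightarrow> 'a::ring_1) set \<Rightarrow> bool" where
  "submodule \<Lambda> U \<longleftrightarrow> U \<subseteq> fin_vecs \<Lambda> \<and> 0 \<in> U \<and> (\<forall>x\<in>U. \<forall>y\<in>U. x + y \<in> U) \<and>
     (\<forall>x\<in>U. \<forall>r. (\<lambda>i. x i * r) \<in> U)"

definition cfm_mult_vec :: "'l set \<Rightarrow> ('l \<Rightarrow> 'l \<Rightarrow> 'a::ring_1) \<Rightarrow> ('l \<Rightarrow> 'a) \<Rightarrow> 'l \<Rightarrow> 'a" where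
  "cfm_mult_vec \<Lambda> M v = (\<lambda>i. \<Sum>j\<in>{j\<in>\<Lambda>. v j \<noteq> 0}. M i j * v j)"

definition single_vec :: "'l \<Rightarrow> 'a::ring_1 \<Rightarrow> 'l \<Rightarrow> 'a" where
  "single_vec j r = (\<lambda>i. if i = j then r else 0)"

lemma right_ideal_mult_closed: "right_ideal I \<Longrightarrow> x \<in> I \<Longrightarrow> x * r \<in> I"
  and right_ideal_zero: "right_ideal I \<Longrightarrow> 0 \<in> I"
  and right_ideal_add: "right_ideal I \<Longrightarrow> x \<in> I \<Longrightarrow> y \<in> I \<Longrightarrow> x + y \<in> I"
  unfolding right_ideal_def right_ideal_in_def by auto

lemma set_plus_in_subset_left: "(0::'b::monoid_add) \<in> B \<Longrightarrow> A \<subseteq> set_plus_in (+) A B"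
  unfolding set_plus_in_def by force

lemma set_plus_in_subset_right: "(0::'b::monoid_add) \<in> A \<Longrightarrow> B \<subseteq> set_plus_in (+) A B"
  unfolding set_plus_in_def by force

lemma fin_vecs_finite: "v \<in> fin_vecs \<Lambda> \<Longrightarrow> finite {i. v i \<noteq> 0}"
  unfolding fin_vecs_def by auto

lemma fin_vecs_outside: "v \<in> fin_vecs \<Lambda> \<Longrightarrow> i \<notin> \<Lambda> \<Longrightarrow> v i = 0"
  unfolding fin_vecs_def by auto

lemma fin_vecs_zero: "0 \<in> fin_vecs \<Lambda>"
  unfolding fin_vecs_def by auto

lemma fin_vecs_add:
  assumes "v \<in> fin_vecs \<Lambda>" "w \<in> fin_vecs \<Lambda>"
  shows "v + w \<in> fin_vecs \<Lambda>"
proof -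
  have "{i. (v + w) i \<noteq> 0} \<subseteq> {i. v i \<noteq> 0} \<union> {i. w i \<noteq> 0}" by auto
  then show ?thesis using assms unfolding fin_vecs_def by (auto elim: finite_subset)
qed

lemma fin_vecs_scale: "v \<in> fin_vecs \<Lambda> \<Longrightarrow> (\<lambda>i. v i * r) \<in> fin_vecs \<Lambda>"
  unfolding fin_vecs_def by (auto elim!: finite_subset[rotated])

lemma single_vec_in_fin_vecs: "j \<in> \<Lambda> \<Longrightarrow> single_vec j r \<in> fin_vecs \<Lambda>"
  unfolding fin_vecs_def single_vec_def by (auto intro: finite_subset[of _ "{j}"])

lemma single_vec_add: "single_vec j (r + s) = single_vec j r + single_vec j s"
  by (intro ext) (simp add: single_vec_def)

lemma single_vec_mult: "single_vec j (r * t) = (\<lambda>i. single_vec j r i * t)"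
  by (intro ext) (simp add: single_vec_def)

lemma single_vec_zero [simp]: "single_vec j 0 = 0"
  by (intro ext) (simp add: single_vec_def)

lemma single_vec_sum: "single_vec j (\<Sum>x\<in>F. f x) = (\<lambda>i. \<Sum>x\<in>F. single_vec j (f x) i * 1)"
  by (intro ext) (simp add: single_vec_def)

lemma fin_vecs_single_vec_expansion:
  assumes "v \<in> fin_vecs \<Lambda>"
  shows "v = (\<lambda>i. \<Sum>k\<in>{k. v k \<noteq> 0}. single_vec k (v k) i * 1)"
proof (intro ext)
  fix i
  have "(\<Sum>k\<in>{k. v k \<noteq> 0}. single_vec k (v k) i * 1) = (\<Sum>k\<in>{k. v k \<noteq> 0}. if k = i then v i else 0)"
    by (rule sum.cong) (auto simp: single_vec_def)
  also have "\<dots> = v i" using fin_vecs_finite[OF assms] by (simp add: sum.delta)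
  finally show "v i = (\<Sum>k\<in>{k. v k \<noteq> 0}. single_vec k (v k) i * 1)" by simp
qed

lemma submodule_zero: "submodule \<Lambda> U \<Longrightarrow> 0 \<in> U"
  and submodule_add: "submodule \<Lambda> U \<Longrightarrow> x \<in> U \<Longrightarrow> y \<in> U \<Longrightarrow> x + y \<in> U"
  and submodule_scale: "submodule \<Lambda> U \<Longrightarrow> x \<in> U \<Longrightarrow> (\<lambda>i. x i * r) \<in> U"
  and submodule_subset: "submodule \<Lambda> U \<Longrightarrow> U \<subseteq> fin_vecs \<Lambda>"
  unfolding submodule_def by blast+

lemma submodule_uminus: "submodule \<Lambda> U \<Longrightarrow> x \<in> U \<Longrightarrow> - x \<in> U"
  using submodule_scale[of \<Lambda> U x "- 1"] by (simp add: fun_Compl_def)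

lemma submodule_diff: "submodule \<Lambda> U \<Longrightarrow> x \<in> U \<Longrightarrow> y \<in> U \<Longrightarrow> x - y \<in> U"
  using submodule_add submodule_uminus by (metis diff_conv_add_uminus)

lemma submodule_lincomb:
  assumes U: "submodule \<Lambda> U" and "finite K" and "\<forall>k\<in>K. g k \<in> U"
  shows "(\<lambda>i. \<Sum>k\<in>K. g k i * s k) \<in> U"
  using assms(2,3)
proof (induction K rule: finite_induct)
  case empty
  then show ?case using submodule_zero[OF U] by (simp add: zero_fun_def)
next
  case (insert k K)
  have "(\<lambda>i. \<Sum>k\<in>insert k K. g k i * s k) = (\<lambda>i. g k i * s k) + (\<lambda>i. \<Sum>k\<in>K. g k i * s k)"
    using insert.hyps by (intro ext) simp
  then show ?case using insert submodule_add[OF U] submodule_scale[OF U] by auto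
qed

lemma submodule_set_plus:
  assumes N: "submodule \<Lambda> N" and M: "submodule \<Lambda> M"
  shows "submodule \<Lambda> (set_plus_in (+) N M)"
  unfolding submodule_def set_plus_in_def
proof (intro conjI ballI allI)
  show "{n + m |n m. n \<in> N \<and> m \<in> M} \<subseteq> fin_vecs \<Lambda>"
    using submodule_subset[OF N] submodule_subset[OF M] fin_vecs_add by blast
  show "0 \<in> {n + m |n m. n \<in> N \<and> m \<in> M}"
    using submodule_zero[OF N] submodule_zero[OF M] by (intro CollectI exI[of _ 0]) simp
next
  fix x y assume "x \<in> {n + m |n m. n \<in> N \<and> m \<in> M}" "y \<in> {n + m |n m. n \<in> N \<and> m \<in> M}"
  then obtain n m n' m' where "n \<in> N" "m \<in> M" "n' \<in> N" "m' \<in> M" "x = n + m" "y = n' + m'" by blast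
  moreover have "x + y = (n + n') + (m + m')" using calculation by (simp add: algebra_simps)
  ultimately show "x + y \<in> {n + m |n m. n \<in> N \<and> m \<in> M}"
    using submodule_add[OF N] submodule_add[OF M] by blast
next
  fix x r assume "x \<in> {n + m |n m. n \<in> N \<and> m \<in> M}"
  then obtain n m where "n \<in> N" "m \<in> M" "x = n + m" by blast
  moreover have "(\<lambda>i. x i * r) = (\<lambda>i. n i * r) + (\<lambda>i. m i * r)"
    using calculation by (intro ext) (simp add: distrib_right)
  ultimately show "(\<lambda>i. x i * r) \<in> {n + m |n m. n \<in> N \<and> m \<in> M}"
    using submodule_scale[OF N] submodule_scale[OF M] by blast
qed

lemma submodule_single_vec_image:
  assumes "right_ideal I" and "j \<in> \<Lambda>"
  shows "submodule \<Lambda> (single_vec j ` I)"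
  using assms single_vec_in_fin_vecs[OF assms(2)]
  unfolding submodule_def right_ideal_def right_ideal_in_def
  by (auto simp flip: single_vec_add single_vec_mult intro!: image_eqI[of 0 _ 0])

lemma right_ideal_single_vec_preimage:
  assumes "submodule \<Lambda> P" and "right_ideal I"
  shows "right_ideal {r\<in>I. single_vec j r \<in> P}"
  using assms unfolding right_ideal_def right_ideal_in_def
  by (auto simp: single_vec_add single_vec_mult submodule_zero submodule_add submodule_scale)

lemma submodule_chain_Union:
  assumes Ch: "Ch \<in> chains {U. submodule \<Lambda> U}"
  shows "submodule \<Lambda> (insert 0 (\<Union>Ch))"
proof -
  have sub: "submodule \<Lambda> X" if "X \<in> Ch" for X using chainsD2[OF Ch] that by blast
  have add: "x + y \<in> insert 0 (\<Union>Ch)" if xy: "x \<in> insert 0 (\<Union>Ch)" "y \<in> insert 0 (\<Union>Ch)" for x y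
  proof (cases "x = 0 \<or> y = 0")
    case True
    then show ?thesis using xy by (metis add.left_neutral add.right_neutral)
  next
    case False
    then obtain X Y where "x \<in> X" "X \<in> Ch" "y \<in> Y" "Y \<in> Ch" using xy by auto
    then show ?thesis using chainsD[OF Ch \<open>X \<in> Ch\<close> \<open>Y \<in> Ch\<close>] sub submodule_add by blast
  qed
  have scale: "(\<lambda>i. x i * r) \<in> insert 0 (\<Union>Ch)" if x: "x \<in> insert 0 (\<Union>Ch)" for x r
  proof (cases "x = 0")
    case True
    then show ?thesis by (simp add: zero_fun_def)
  next
    case False
    then obtain X where "x \<in> X" "X \<in> Ch" using x by auto
    then show ?thesis using sub submodule_scale by blast
  qed
  have "insert 0 (\<Union>Ch) \<subseteq> fin_vecs \<Lambda>" using sub submodule_subset fin_vecs_zero by blast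
  then show ?thesis unfolding submodule_def using add scale by blast
qed

lemma exists_maximal_disjoint_submodule:
  assumes N: "submodule \<Lambda> N"
  obtains M where "submodule \<Lambda> M" "N \<inter> M = {0}"
    "\<And>X. submodule \<Lambda> X \<Longrightarrow> N \<inter> X = {0} \<Longrightarrow> M \<subseteq> X \<Longrightarrow> X = M"
proof -
  define A where "A = {M. submodule \<Lambda> M \<and> N \<inter> M = {0}}"
  have "\<exists>U\<in>A. \<forall>X\<in>Ch. X \<subseteq> U" if Ch: "Ch \<in> chains A" for Ch
  proof
    have "Ch \<in> chains {U. submodule \<Lambda> U}" using Ch unfolding A_def chains_def chain_subset_def by blast
    moreover have "N \<inter> insert 0 (\<Union>Ch) = {0}" using chainsD2[OF Ch] submodule_zero[OF N] unfolding A_def by auto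
    ultimately show "insert 0 (\<Union>Ch) \<in> A" unfolding A_def using submodule_chain_Union by blast
  qed auto
  then obtain M where "M \<in> A" "\<forall>X\<in>A. M \<subseteq> X \<longrightarrow> X = M" using Zorn_Lemma2[of A] by blast
  then show thesis by (intro that) (auto simp: A_def)
qed

text \<open>By minimality of I, the copy of I in coordinate j either lies in N + M or meets it trivially;
  in the latter case it could be added to M, contradicting maximality.\<close>
lemma maximal_disjoint_submodule_absorbs_minimal:
  assumes N: "submodule \<Lambda> N" and M: "submodule \<Lambda> M" and NM: "N \<inter> M = {0}"
    and max: "\<And>X. submodule \<Lambda> X \<Longrightarrow> N \<inter> X = {0} \<Longrightarrow> M \<subseteq> X \<Longrightarrow> X = M"
    and I: "minimal_right_ideal I" and j: "j \<in> \<Lambda>" and r: "r \<in> I"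
  shows "single_vec j r \<in> set_plus_in (+) N M"
proof -
  let ?P = "set_plus_in (+) N M"
  have P: "submodule \<Lambda> ?P" using submodule_set_plus[OF N M] .
  have I_ideal: "right_ideal I" using I unfolding minimal_right_ideal_def by blast
  define I' where "I' = {s\<in>I. single_vec j s \<in> ?P}"
  have "right_ideal I'" unfolding I'_def using right_ideal_single_vec_preimage[OF P I_ideal] .
  then consider "I' = I" | "I' = {0}" using I unfolding minimal_right_ideal_def I'_def by blast
  then show ?thesis
  proof cases
    case 1
    then show ?thesis using r unfolding I'_def by blast
  next
    case 2
    define M' where "M' = set_plus_in (+) M (single_vec j ` I)"
    have M': "submodule \<Lambda> M'"
      unfolding M'_def using submodule_set_plus[OF M submodule_single_vec_image[OF I_ideal j]] .
    have "n = 0" if "n \<in> N" "n \<in> M'" for n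
    proof -
      obtain m s where m: "m \<in> M" and s: "s \<in> I" and n: "n = m + single_vec j s"
        using \<open>n \<in> M'\<close> unfolding M'_def set_plus_in_def by blast
      have "single_vec j s = n + - m" using n by simp
      then have "single_vec j s \<in> ?P"
        unfolding set_plus_in_def using \<open>n \<in> N\<close> submodule_uminus[OF M m] by blast
      then have "s = 0" using 2 s unfolding I'_def by blast
      then show "n = 0" using n m \<open>n \<in> N\<close> NM by auto
    qed
    then have "N \<inter> M' = {0}" using submodule_zero[OF N] submodule_zero[OF M'] by blast
    moreover have "0 \<in> single_vec j ` I" using right_ideal_zero[OF I_ideal] by force
    then have "M \<subseteq> M'" unfolding M'_def by (rule set_plus_in_subset_left)
    ultimately have "M' = M" using max M' by blast
    moreover have "single_vec j r \<in> M'"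
      using set_plus_in_subset_right[OF submodule_zero[OF M]] r unfolding M'_def by blast
    ultimately show ?thesis using set_plus_in_subset_right[OF submodule_zero[OF N]] by blast
  qed
qed

lemma semisimple_submodule_complement:
  assumes ss: "semisimple_ring TYPE('a::ring_1)" and N: "submodule \<Lambda> (N :: ('l \<Rightarrow> 'a) set)"
  obtains M where "submodule \<Lambda> M" "N \<inter> M = {0}" "set_plus_in (+) N M = fin_vecs \<Lambda>"
proof -
  obtain M where M: "submodule \<Lambda> M" and NM: "N \<inter> M = {0}"
    and max: "\<And>X. submodule \<Lambda> X \<Longrightarrow> N \<inter> X = {0} \<Longrightarrow> M \<subseteq> X \<Longrightarrow> X = M"
    using exists_maximal_disjoint_submodule[OF N] by blast
  let ?P = "set_plus_in (+) N M"
  have P: "submodule \<Lambda> ?P" using submodule_set_plus[OF N M] .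
  have single: "single_vec j r \<in> ?P" if j: "j \<in> \<Lambda>" for j r
  proof -
    obtain F f where F: "finite F" "\<forall>I\<in>F. minimal_right_ideal I \<and> f I \<in> I" "r = (\<Sum>I\<in>F. f I)"
      using ss[unfolded semisimple_ring_def, THEN spec, of r] by blast
    have "\<forall>I\<in>F. single_vec j (f I) \<in> ?P"
      using maximal_disjoint_submodule_absorbs_minimal[OF N M NM max _ j] F(2) by blast
    then have "(\<lambda>i. \<Sum>I\<in>F. single_vec j (f I) i * 1) \<in> ?P" by (rule submodule_lincomb[OF P F(1)])
    then show ?thesis unfolding F(3) single_vec_sum .
  qed
  have "fin_vecs \<Lambda> \<subseteq> ?P"
  proof
    fix v :: "'l \<Rightarrow> 'a" assume v: "v \<in> fin_vecs \<Lambda>"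
    have "\<forall>k\<in>{k. v k \<noteq> 0}. single_vec k (v k) \<in> ?P" using single fin_vecs_outside[OF v] by blast
    then have "(\<lambda>i. \<Sum>k\<in>{k. v k \<noteq> 0}. single_vec k (v k) i * 1) \<in> ?P"
      by (rule submodule_lincomb[OF P fin_vecs_finite[OF v]])
    then show "v \<in> ?P" by (simp only: fin_vecs_single_vec_expansion[OF v, symmetric])
  qed
  then show thesis using that M NM submodule_subset[OF P] by blast
qed

section \<open>Semisimple rings have regular, hence SSP, column finite matrix rings\<close>

lemma cfm_mult_vec_eq_sum:
  assumes v: "v \<in> fin_vecs \<Lambda>" and J: "finite J" "{j. v j \<noteq> 0} \<subseteq> J"
  shows "cfm_mult_vec \<Lambda> M v i = (\<Sum>j\<in>J. M i j * v j)"
  unfolding cfm_mult_vec_def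
proof (rule sum.mono_neutral_left[OF J(1)], use J in blast, intro ballI)
  fix j assume "j \<in> J - {j \<in> \<Lambda>. v j \<noteq> 0}"
  then have "v j = 0" using fin_vecs_outside[OF v, of j] by auto
  then show "M i j * v j = 0" by simp
qed

lemma cfm_mult_vec_closed:
  assumes M: "M \<in> cfm \<Lambda>" and v: "v \<in> fin_vecs \<Lambda>"
  shows "cfm_mult_vec \<Lambda> M v \<in> fin_vecs \<Lambda>"
proof -
  let ?S = "{j\<in>\<Lambda>. v j \<noteq> 0}"
  have "{i. cfm_mult_vec \<Lambda> M v i \<noteq> 0} \<subseteq> (\<Union>j\<in>?S. {i\<in>\<Lambda>. M i j \<noteq> 0})"
  proof
    fix i assume "i \<in> {i. cfm_mult_vec \<Lambda> M v i \<noteq> 0}"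
    then obtain j where "j \<in> ?S" "M i j * v j \<noteq> 0"
      unfolding cfm_mult_vec_def by (auto elim: sum.not_neutral_contains_not_neutral)
    moreover from this have "i \<in> \<Lambda>" using cfm_outside[OF M, of i j] by (metis mult_zero_left)
    ultimately show "i \<in> (\<Union>j\<in>?S. {i\<in>\<Lambda>. M i j \<noteq> 0})" by auto
  qed
  moreover have "finite (\<Union>j\<in>?S. {i\<in>\<Lambda>. M i j \<noteq> 0})"
    using fin_vecs_finite[OF v] cfm_finite_column[OF M] by auto
  moreover have "cfm_mult_vec \<Lambda> M v i = 0" if "i \<notin> \<Lambda>" for i
    unfolding cfm_mult_vec_def using cfm_outside[OF M] that by (auto intro: sum.neutral)
  ultimately show ?thesis unfolding fin_vecs_def by (auto elim: finite_subset)
qed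

lemma cfm_mult_vec_add:
  assumes v: "v \<in> fin_vecs \<Lambda>" and w: "w \<in> fin_vecs \<Lambda>"
  shows "cfm_mult_vec \<Lambda> M (v + w) = cfm_mult_vec \<Lambda> M v + cfm_mult_vec \<Lambda> M w"
proof (intro ext)
  fix i
  define J where "J = {j. v j \<noteq> 0} \<union> {j. w j \<noteq> 0}"
  have J: "finite J" using fin_vecs_finite[OF v] fin_vecs_finite[OF w] J_def by auto
  have "cfm_mult_vec \<Lambda> M (v + w) i = (\<Sum>j\<in>J. M i j * (v + w) j)"
    by (rule cfm_mult_vec_eq_sum[OF fin_vecs_add[OF v w] J]) (auto simp: J_def)
  also have "\<dots> = (\<Sum>j\<in>J. M i j * v j) + (\<Sum>j\<in>J. M i j * w j)"
    by (simp add: distrib_left sum.distrib)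
  also have "\<dots> = cfm_mult_vec \<Lambda> M v i + cfm_mult_vec \<Lambda> M w i"
    using cfm_mult_vec_eq_sum[OF v J] cfm_mult_vec_eq_sum[OF w J] J_def by auto
  finally show "cfm_mult_vec \<Lambda> M (v + w) i = (cfm_mult_vec \<Lambda> M v + cfm_mult_vec \<Lambda> M w) i" by simp
qed

lemma cfm_mult_vec_scale:
  assumes v: "v \<in> fin_vecs \<Lambda>"
  shows "cfm_mult_vec \<Lambda> M (\<lambda>i. v i * r) = (\<lambda>i. cfm_mult_vec \<Lambda> M v i * r)"
proof (intro ext)
  fix i
  have "cfm_mult_vec \<Lambda> M (\<lambda>i. v i * r) i = (\<Sum>j\<in>{j. v j \<noteq> 0}. M i j * (v j * r))"
    by (rule cfm_mult_vec_eq_sum[OF fin_vecs_scale[OF v] fin_vecs_finite[OF v]]) auto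
  also have "\<dots> = cfm_mult_vec \<Lambda> M v i * r"
    using cfm_mult_vec_eq_sum[OF v fin_vecs_finite[OF v], of M i] by (simp add: sum_distrib_right mult.assoc)
  finally show "cfm_mult_vec \<Lambda> M (\<lambda>i. v i * r) i = cfm_mult_vec \<Lambda> M v i * r" .
qed

lemma submodule_cfm_image:
  assumes M: "M \<in> cfm \<Lambda>"
  shows "submodule \<Lambda> (cfm_mult_vec \<Lambda> M ` fin_vecs \<Lambda>)"
  unfolding submodule_def
proof (intro conjI ballI allI)
  show "cfm_mult_vec \<Lambda> M ` fin_vecs \<Lambda> \<subseteq> fin_vecs \<Lambda>" using cfm_mult_vec_closed[OF M] by auto
  have "cfm_mult_vec \<Lambda> M 0 = 0" unfolding cfm_mult_vec_def by (intro ext) simp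
  then show "0 \<in> cfm_mult_vec \<Lambda> M ` fin_vecs \<Lambda>" using fin_vecs_zero by (metis image_eqI)
next
  fix x y assume "x \<in> cfm_mult_vec \<Lambda> M ` fin_vecs \<Lambda>" "y \<in> cfm_mult_vec \<Lambda> M ` fin_vecs \<Lambda>"
  then obtain v w where v: "v \<in> fin_vecs \<Lambda>" "x = cfm_mult_vec \<Lambda> M v"
    and w: "w \<in> fin_vecs \<Lambda>" "y = cfm_mult_vec \<Lambda> M w" by blast
  then have "x + y = cfm_mult_vec \<Lambda> M (v + w)" by (simp add: cfm_mult_vec_add)
  then show "x + y \<in> cfm_mult_vec \<Lambda> M ` fin_vecs \<Lambda>" using fin_vecs_add[OF v(1) w(1)] by blast
next
  fix x r assume "x \<in> cfm_mult_vec \<Lambda> M ` fin_vecs \<Lambda>"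
  then obtain v where v: "v \<in> fin_vecs \<Lambda>" "x = cfm_mult_vec \<Lambda> M v" by blast
  then have "(\<lambda>i. x i * r) = cfm_mult_vec \<Lambda> M (\<lambda>i. v i * r)" by (simp add: cfm_mult_vec_scale)
  then show "(\<lambda>i. x i * r) \<in> cfm_mult_vec \<Lambda> M ` fin_vecs \<Lambda>" using fin_vecs_scale[OF v(1)] by blast
qed

lemma cfm_mult_vec_single_vec_one:
  fixes M :: "'l \<Rightarrow> 'l \<Rightarrow> 'a::ring_1"
  assumes "l \<in> \<Lambda>"
  shows "cfm_mult_vec \<Lambda> M (single_vec l 1) = (\<lambda>k. M k l)"
proof -
  have "{j\<in>\<Lambda>. single_vec l 1 j \<noteq> (0::'a)} = {l}" using assms by (auto simp: single_vec_def)
  then show ?thesis unfolding cfm_mult_vec_def by (simp add: single_vec_def)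
qed

lemma cfm_of_columns:
  assumes "\<And>k. k \<in> \<Lambda> \<Longrightarrow> d k \<in> fin_vecs \<Lambda>"
  shows "(\<lambda>i k. if k \<in> \<Lambda> then d k i else 0) \<in> cfm \<Lambda>"
proof (rule cfmI)
  fix i k assume "i \<notin> \<Lambda> \<or> k \<notin> \<Lambda>"
  then show "(if k \<in> \<Lambda> then d k i else 0) = 0" by (auto intro: fin_vecs_outside[OF assms])
next
  fix k assume "k \<in> \<Lambda>"
  then have "{i\<in>\<Lambda>. (if k \<in> \<Lambda> then d k i else 0) \<noteq> 0} \<subseteq> {i. d k i \<noteq> 0}" by auto
  then show "finite {i\<in>\<Lambda>. (if k \<in> \<Lambda> then d k i else 0) \<noteq> 0}"
    using fin_vecs_finite[OF assms[OF \<open>k \<in> \<Lambda>\<close>]] by (rule finite_subset)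
qed

text \<open>Column l of a is the image of the unit vector e_l, hence lies in the image N of a; expanding
  it along the decomposition e_k = a d_k + (e_k - a d_k) leaves a remainder in N \<inter> K = 0.\<close>
lemma column_eq_through_complement:
  assumes a: "a \<in> cfm \<Lambda>" and K: "submodule \<Lambda> K" and NK: "cfm_mult_vec \<Lambda> a ` fin_vecs \<Lambda> \<inter> K = {0}"
    and d: "\<And>k. k \<in> \<Lambda> \<Longrightarrow> single_vec k 1 - cfm_mult_vec \<Lambda> a (d k) \<in> K"
    and d_vecs: "\<And>k. k \<in> \<Lambda> \<Longrightarrow> d k \<in> fin_vecs \<Lambda>" and l: "l \<in> \<Lambda>"
  shows "(\<Sum>k\<in>{k\<in>\<Lambda>. a k l \<noteq> 0}. cfm_mult_vec \<Lambda> a (d k) i * a k l) = a i l"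
proof -
  let ?N = "cfm_mult_vec \<Lambda> a ` fin_vecs \<Lambda>" and ?S = "{k\<in>\<Lambda>. a k l \<noteq> 0}"
  have N: "submodule \<Lambda> ?N" using submodule_cfm_image[OF a] .
  have S: "finite ?S" using cfm_finite_column[OF a] .
  define w where "w = (\<lambda>k. a k l)"
  define n where "n = (\<lambda>i. \<Sum>k\<in>?S. cfm_mult_vec \<Lambda> a (d k) i * w k)"
  define c where "c = (\<lambda>i. \<Sum>k\<in>?S. (single_vec k 1 - cfm_mult_vec \<Lambda> a (d k)) i * w k)"
  have w: "w \<in> ?N"
    unfolding w_def cfm_mult_vec_single_vec_one[OF l, of a, symmetric] using single_vec_in_fin_vecs[OF l] by blast
  have n: "n \<in> ?N" unfolding n_def using d_vecs by (intro submodule_lincomb[OF N S]) blast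
  have c: "c \<in> K" unfolding c_def using d by (intro submodule_lincomb[OF K S]) blast
  have "(n + c) i = w i" for i
  proof -
    have "(n + c) i = (\<Sum>k\<in>?S. single_vec k 1 i * w k)"
      unfolding n_def c_def by (simp add: sum.distrib[symmetric] algebra_simps)
    also have "\<dots> = (\<Sum>k\<in>?S. if k = i then w i else 0)" by (rule sum.cong) (auto simp: single_vec_def)
    also have "\<dots> = w i" using S cfm_outside[OF a, of i l] by (auto simp: w_def)
    finally show ?thesis .
  qed
  then have "w = n + c" by auto
  then have "c \<in> ?N" using submodule_diff[OF N w n] by (simp add: algebra_simps)
  then have "w = n" using c NK \<open>w = n + c\<close> by auto
  then show ?thesis unfolding n_def w_def by metis
qed

lemma semisimple_cfm_vn_regular:
  assumes ss: "semisimple_ring TYPE('a::ring_1)" and a: "(a :: 'l \<Rightarrow> 'l \<Rightarrow> 'a) \<in> cfm \<Lambda>"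
  shows "\<exists>b\<in>cfm \<Lambda>. cfm_mult \<Lambda> (cfm_mult \<Lambda> a b) a = a"
proof -
  let ?N = "cfm_mult_vec \<Lambda> a ` fin_vecs \<Lambda>"
  obtain K where K: "submodule \<Lambda> K" and NK: "?N \<inter> K = {0}" and NK_all: "set_plus_in (+) ?N K = fin_vecs \<Lambda>"
    using semisimple_submodule_complement[OF ss submodule_cfm_image[OF a]] by blast
  have "\<exists>v\<in>fin_vecs \<Lambda>. single_vec k 1 - cfm_mult_vec \<Lambda> a v \<in> K" if k: "k \<in> \<Lambda>" for k
  proof -
    obtain v c where "v \<in> fin_vecs \<Lambda>" "c \<in> K" "single_vec k 1 = cfm_mult_vec \<Lambda> a v + c"
      using single_vec_in_fin_vecs[OF k] NK_all unfolding set_plus_in_def by blast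
    then show ?thesis by (metis add_diff_cancel_left')
  qed
  then obtain d where d: "\<And>k. k \<in> \<Lambda> \<Longrightarrow> d k \<in> fin_vecs \<Lambda> \<and> single_vec k 1 - cfm_mult_vec \<Lambda> a (d k) \<in> K"
    by metis
  define b where "b = (\<lambda>i k. if k \<in> \<Lambda> then d k i else 0)"
  have b: "b \<in> cfm \<Lambda>" unfolding b_def by (rule cfm_of_columns) (use d in blast)
  have "cfm_mult \<Lambda> (cfm_mult \<Lambda> a b) a i l = a i l" for i l
  proof (cases "l \<in> \<Lambda>")
    case False
    then show ?thesis using cfm_outside[OF cfm_mult_closed[OF cfm_mult_closed[OF a b] a]] cfm_outside[OF a] by auto
  next
    case True
    have "cfm_mult \<Lambda> a b i k = cfm_mult_vec \<Lambda> a (d k) i" if "k \<in> \<Lambda>" for k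
      unfolding cfm_mult_def cfm_mult_vec_def b_def using that by simp
    then show ?thesis
      using column_eq_through_complement[OF a K NK _ _ True, of d i] d by (simp add: cfm_mult_def)
  qed
  then show ?thesis using b by blast
qed

lemma semisimple_imp_CFM_SSP:
  assumes "semisimple_ring TYPE('a::ring_1)"
  shows "CFM_SSP TYPE('a) (\<Lambda> :: 'l set)"
proof -
  interpret ring_on "cfm \<Lambda> :: ('l \<Rightarrow> 'l \<Rightarrow> 'a) set" "cfm_mult \<Lambda>" "cfm_one \<Lambda>" by (rule ring_on_cfm)
  have vn_regular unfolding vn_regular_def using semisimple_cfm_vn_regular[OF assms] by blast
  then show ?thesis unfolding CFM_SSP_def cfm_add_eq cfm_zero_eq by (rule vn_regular_imp_SSP)
qed

section \<open>Countably generated right ideals that split\<close>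

text \<open>For the sequence x, the element e = (\<Sum>k\<in>S. x k * r k) lies in the right ideal X generated
  by the x m and is a left unit on X; hence X = eR with e idempotent. The condition therefore says
  that every countably generated right ideal is a direct summand of R_R.\<close>
definition countably_generated_right_ideals_split :: "'a::ring_1 itself \<Rightarrow> bool" where
  "countably_generated_right_ideals_split _ \<longleftrightarrow>
     (\<forall>x::nat \<Rightarrow> 'a. \<exists>S r. finite S \<and> (\<forall>m. (\<Sum>k\<in>S. x k * r k) * x m = x m))"

lemma right_ideal_sum:
  assumes "right_ideal I"
  shows "finite S \<Longrightarrow> \<forall>k\<in>S. g k \<in> I \<Longrightarrow> sum g S \<in> I"
  by (induction S rule: finite_induct) (auto simp: right_ideal_zero[OF assms] right_ideal_add[OF assms])

lemma right_ideal_range_mult: "right_ideal (range ((*) (z::'a::ring_1)))"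
  unfolding right_ideal_def right_ideal_in_def
proof (intro conjI ballI)
  show "0 \<in> range ((*) z)" by (metis mult_zero_right rangeI)
  show "x + y \<in> range ((*) z)" if "x \<in> range ((*) z)" "y \<in> range ((*) z)" for x y
    using that by (auto simp flip: distrib_left)
  show "x * r \<in> range ((*) z)" if "x \<in> range ((*) z)" for x r
    using that by (auto simp: mult.assoc)
qed simp

lemma range_mult_nonzero: "(z::'a::ring_1) \<noteq> 0 \<Longrightarrow> range ((*) z) \<noteq> {0}"
  by (metis mult_1_right rangeI singletonD)

lemma split_imp_regular:
  assumes "countably_generated_right_ideals_split TYPE('a::ring_1)"
  shows "\<exists>s. z * s * z = (z::'a)"
proof -
  obtain S :: "nat set" and r where "\<forall>m::nat. (\<Sum>k\<in>S. z * r k) * z = z"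
    using assms[unfolded countably_generated_right_ideals_split_def, THEN spec[of _ "\<lambda>_. z"]] by blast
  then have "z * (\<Sum>k\<in>S. r k) * z = z" by (simp add: sum_distrib_left)
  then show ?thesis by blast
qed

lemma idempotent_shrinks_unless_minimal:
  assumes split: "countably_generated_right_ideals_split TYPE('a::ring_1)"
    and f: "f * f = f" "f \<noteq> (0::'a)" and not_min: "\<not> minimal_right_ideal (range ((*) f))"
  obtains f' where "f' * f' = f'" "f' \<noteq> 0" "f' \<noteq> f" "f * f' = f'" "f' * f = f'"
proof -
  obtain J where J: "right_ideal J" "J \<subseteq> range ((*) f)" "J \<noteq> {0}" "J \<noteq> range ((*) f)"
    using not_min right_ideal_range_mult[of f] range_mult_nonzero[OF f(2)]
    unfolding minimal_right_ideal_def by blast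
  obtain z where z: "z \<in> J" "z \<noteq> 0" using J(1,3) right_ideal_zero by blast
  obtain s where s: "z * s * z = z" using split_imp_regular[OF split] by blast
  define e where "e = z * s"
  have ez: "e * z = z" and ee: "e * e = e" using s unfolding e_def by (simp_all flip: mult.assoc)
  obtain t where "z = f * t" using J(2) z(1) by auto
  then have fz: "f * z = z" using f(1) by (simp flip: mult.assoc)
  then have fe: "f * e = e" unfolding e_def by (simp flip: mult.assoc)
  define f' where "f' = e * f"
  have "f' * f' = f'" "f * f' = f'" "f' * f = f'"
    unfolding f'_def using fe ee f(1) by (simp_all add: mult.assoc) (metis mult.assoc)+
  moreover have "f' \<noteq> 0"
  proof
    assume "f' = 0"
    then have "f' * z = 0" by simp
    moreover have "f' * z = z" unfolding f'_def by (simp add: mult.assoc fz ez)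
    ultimately show False using z(2) by simp
  qed
  moreover have "f' \<noteq> f"
  proof
    assume ff: "f' = f"
    have "f' = z * (s * f)" unfolding f'_def e_def by (simp add: mult.assoc)
    then have "f \<in> J" using ff right_ideal_mult_closed[OF J(1) z(1), of "s * f"] by metis
    then have "range ((*) f) \<subseteq> J" using right_ideal_mult_closed[OF J(1)] by auto
    then show False using J(2,4) by blast
  qed
  ultimately show thesis using that by blast
qed

text \<open>The complements 1 - f n form an ascending chain; a finite left unit for all of them,
  provided by the splitting condition, already fixes the next one.\<close>
lemma descending_idempotents_stabilize:
  assumes split: "countably_generated_right_ideals_split TYPE('a::ring_1)"
    and idem: "\<And>n. f n * f n = (f n :: 'a)"
    and desc: "\<And>n. f n * f (Suc n) = f (Suc n)" "\<And>n. f (Suc n) * f n = f (Suc n)"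
  shows "\<exists>n. f (Suc n) = f n"
proof -
  define x where "x n = 1 - f n" for n
  have x_idem: "x n * x n = x n" for n unfolding x_def using idem[of n] by (simp add: algebra_simps)
  have x_step: "x (Suc n) * x n = x n" for n unfolding x_def using desc(2)[of n] by (simp add: algebra_simps)
  have x_mono: "x N * x k = x k" if "k \<le> N" for k N
    using that
  proof (induction N)
    case 0
    then show ?case using x_idem by simp
  next
    case (Suc N)
    show ?case
    proof (cases "k = Suc N")
      case True
      then show ?thesis using x_idem by simp
    next
      case False
      then have "x (Suc N) * x k = x (Suc N) * x N * x k" using Suc by (simp add: mult.assoc)
      then show ?thesis using x_step Suc False by simp
    qed
  qed
  obtain S r where S: "finite S" "\<forall>m. (\<Sum>k\<in>S. x k * r k) * x m = x m"
    using split unfolding countably_generated_right_ideals_split_def by blast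
  define e where "e = (\<Sum>k\<in>S. x k * r k)"
  define N where "N = Max (insert 0 S)"
  have "x N * e = e" unfolding e_def N_def using S(1) x_mono
    by (simp add: sum_distrib_left flip: mult.assoc)
  then have "x (Suc N) = x N * x (Suc N)" using S(2) unfolding e_def by (metis mult.assoc)
  then have "f N * x (Suc N) = 0"
    using idem[of N] by (simp add: x_def algebra_simps flip: mult.assoc)
  moreover have "f N * x (Suc N) = f N - f (Suc N)" unfolding x_def using desc(1)[of N] by (simp add: algebra_simps)
  ultimately have "f N - f (Suc N) = 0" by simp
  then show ?thesis by (metis right_minus_eq)
qed

lemma exists_minimal_right_ideal_below:
  assumes split: "countably_generated_right_ideals_split TYPE('a::ring_1)" and y: "(y::'a) \<noteq> 0"
  shows "\<exists>I. minimal_right_ideal I \<and> I \<subseteq> range ((*) y)"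
proof (rule ccontr)
  assume no_min: "\<nexists>I. minimal_right_ideal I \<and> I \<subseteq> range ((*) y)"
  define Q where "Q f \<longleftrightarrow> f * f = f \<and> f \<noteq> 0 \<and> f \<in> range ((*) y)" for f
  have "\<exists>f'. Q f' \<and> f' \<noteq> f \<and> f * f' = f' \<and> f' * f = f'" if Qf: "Q f" for f
  proof -
    have f: "f * f = f" "f \<noteq> 0" and fy: "f \<in> range ((*) y)" using Qf unfolding Q_def by auto
    then have "range ((*) f) \<subseteq> range ((*) y)" by (auto simp: mult.assoc)
    then have "\<not> minimal_right_ideal (range ((*) f))" using no_min by blast
    then obtain f' where f': "f' * f' = f'" "f' \<noteq> 0" "f' \<noteq> f" "f * f' = f'" "f' * f = f'"
      using idempotent_shrinks_unless_minimal[OF split f] by blast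
    obtain t where "f = y * t" using fy by blast
    then have "f' = y * (t * f')" using f'(4) by (simp add: mult.assoc)
    then have "f' \<in> range ((*) y)" by blast
    then show ?thesis using f' unfolding Q_def by blast
  qed
  then obtain next_idem where next_idem: "\<And>f. Q f \<Longrightarrow>
      Q (next_idem f) \<and> next_idem f \<noteq> f \<and> f * next_idem f = next_idem f \<and> next_idem f * f = next_idem f"
    by metis
  obtain s where s: "y * s * y = y" using split_imp_regular[OF split] by blast
  have "Q (y * s)" unfolding Q_def using s y by (auto simp: mult.assoc[symmetric])
  define f where "f n = (next_idem ^^ n) (y * s)" for n
  have Qf: "Q (f n)" for n by (induction n) (auto simp: f_def \<open>Q (y * s)\<close> next_idem)
  then have "\<exists>n. f (Suc n) = f n"
    by (intro descending_idempotents_stabilize[OF split]) (auto simp: f_def Q_def next_idem)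
  then show False using next_idem[OF Qf] by (auto simp: f_def)
qed

definition in_right_socle :: "'a::ring_1 \<Rightarrow> bool" where
  "in_right_socle w \<longleftrightarrow>
     (\<exists>F f. finite F \<and> (\<forall>I\<in>F. minimal_right_ideal I \<and> f I \<in> I) \<and> w = (\<Sum>I\<in>F. f I))"

lemma semisimple_if_one_in_right_socle:
  assumes "in_right_socle (1::'a::ring_1)"
  shows "semisimple_ring TYPE('a)"
  unfolding semisimple_ring_def
proof
  fix w :: 'a
  obtain F and f :: "'a set \<Rightarrow> 'a" where F: "finite F" "\<forall>I\<in>F. minimal_right_ideal I \<and> f I \<in> I"
    and one: "1 = (\<Sum>I\<in>F. f I)"
    using assms unfolding in_right_socle_def by blast
  have "w = (\<Sum>I\<in>F. f I * w)" by (metis one mult_1_left sum_distrib_right)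
  moreover have "\<forall>I\<in>F. minimal_right_ideal I \<and> f I * w \<in> I"
  proof
    fix I assume "I \<in> F"
    then have "minimal_right_ideal I" "f I \<in> I" using F(2) by auto
    then show "minimal_right_ideal I \<and> f I * w \<in> I"
      using right_ideal_mult_closed unfolding minimal_right_ideal_def by blast
  qed
  ultimately show "\<exists>F f. finite F \<and> (\<forall>I\<in>F. minimal_right_ideal I \<and> f I \<in> I) \<and> w = (\<Sum>I\<in>F. f I)"
    using F(1) by (intro exI[of _ F] exI[of _ "\<lambda>I. f I * w"]) simp
qed

lemma in_right_socle_lincomb:
  assumes S: "finite S" and min: "\<forall>k\<in>S. minimal_right_ideal (range ((*) (x k)))"
  shows "in_right_socle (\<Sum>k\<in>S. x k * (r k::'a::ring_1))"
proof -
  define F where "F = (\<lambda>k. range ((*) (x k))) ` S"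
  define f where "f I = (\<Sum>k\<in>{k\<in>S. range ((*) (x k)) = I}. x k * r k)" for I
  have "(\<Sum>k\<in>S. x k * r k) = (\<Sum>I\<in>F. f I)"
    unfolding F_def f_def by (rule sum.image_gen[OF S])
  moreover have "minimal_right_ideal I \<and> f I \<in> I" if "I \<in> F" for I
  proof -
    obtain k where k: "k \<in> S" "I = range ((*) (x k))" using \<open>I \<in> F\<close> unfolding F_def by blast
    have "f I \<in> I" unfolding f_def
      by (rule right_ideal_sum) (use k S right_ideal_range_mult in auto)
    then show ?thesis using min k by simp
  qed
  moreover have "finite F" unfolding F_def using S by simp
  ultimately show ?thesis unfolding in_right_socle_def by (intro exI[of _ F] exI[of _ f]) simp
qed

definition right_span :: "'a::ring_1 list \<Rightarrow> 'a set" where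
  "right_span xs = {\<Sum>k<length xs. xs ! k * s k |s. True}"

text \<open>If R is not semisimple, the idempotent supplied by the splitting condition for xs differs
  from 1, and a minimal right ideal inside (1 - e)R is annihilated by e from the left, whereas
  e fixes the span of xs.\<close>
lemma exists_minimal_generator_outside_span:
  assumes split: "countably_generated_right_ideals_split TYPE('a::ring_1)"
    and not_socle: "\<not> in_right_socle (1::'a)"
    and xs: "\<forall>z\<in>set xs. minimal_right_ideal (range ((*) z))"
  shows "\<exists>z::'a. minimal_right_ideal (range ((*) z)) \<and> z \<notin> right_span xs"
proof -
  define x where "x k = (if k < length xs then xs ! k else 0)" for k
  obtain S r where S: "finite S" "\<forall>m. (\<Sum>k\<in>S. x k * r k) * x m = x m"
    using split unfolding countably_generated_right_ideals_split_def by blast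
  define e where "e = (\<Sum>k\<in>S. x k * r k)"
  have ex: "e * x m = x m" for m using S(2) e_def by simp
  have "e = (\<Sum>k\<in>{k\<in>S. k < length xs}. x k * r k)"
    unfolding e_def by (rule sum.mono_neutral_right) (auto simp: S x_def)
  moreover have "in_right_socle (\<Sum>k\<in>{k\<in>S. k < length xs}. x k * r k)"
    by (rule in_right_socle_lincomb) (use S xs in \<open>auto simp: x_def\<close>)
  ultimately have "1 - e \<noteq> 0" using not_socle by auto
  then obtain I where I: "minimal_right_ideal I" "I \<subseteq> range ((*) (1 - e))"
    using exists_minimal_right_ideal_below[OF split] by blast
  have I_ideal: "right_ideal I" using I(1) unfolding minimal_right_ideal_def by blast
  obtain z where z: "z \<in> I" "z \<noteq> 0"
    using I(1) right_ideal_zero[OF I_ideal] unfolding minimal_right_ideal_def by blast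
  have "range ((*) z) \<subseteq> I" using right_ideal_mult_closed[OF I_ideal z(1)] by auto
  then have zI: "range ((*) z) = I"
    using I(1) right_ideal_range_mult[of z] range_mult_nonzero[OF z(2)]
    unfolding minimal_right_ideal_def by blast
  have "e * (\<Sum>k\<in>S. x k * r k) = (\<Sum>k\<in>S. x k * r k)"
    using ex by (simp add: sum_distrib_left flip: mult.assoc)
  then have ee: "e * e = e" unfolding e_def[symmetric] .
  obtain t where "z = (1 - e) * t" using I(2) z(1) by auto
  then have ez: "e * z = 0" using ee by (simp add: right_diff_distrib flip: mult.assoc)
  have "z \<notin> right_span xs"
  proof
    assume "z \<in> right_span xs"
    then obtain s where "z = (\<Sum>k<length xs. xs ! k * s k)" unfolding right_span_def by blast
    also have "\<dots> = (\<Sum>k<length xs. x k * s k)" unfolding x_def by (intro sum.cong) auto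
    finally have "e * z = z" using ex by (simp add: sum_distrib_left flip: mult.assoc)
    then show False using ez z(2) by simp
  qed
  then show ?thesis using I(1) zI by auto
qed

fun greedy_list :: "('b list \<Rightarrow> 'b) \<Rightarrow> nat \<Rightarrow> 'b list" where
  "greedy_list step 0 = []"
| "greedy_list step (Suc n) = greedy_list step n @ [step (greedy_list step n)]"

lemma greedy_list_eq_map: "greedy_list step n = map (\<lambda>k. step (greedy_list step k)) [0..<n]"
  by (induction n) auto

lemma split_imp_semisimple:
  assumes split: "countably_generated_right_ideals_split TYPE('a::ring_1)"
  shows "semisimple_ring TYPE('a)"
proof (rule ccontr)
  assume "\<not> semisimple_ring TYPE('a)"
  then have not_socle: "\<not> in_right_socle (1::'a)" using semisimple_if_one_in_right_socle by blast
  define good where "good xs \<longleftrightarrow> (\<forall>z\<in>set xs. minimal_right_ideal (range ((*) (z::'a))))" for xs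
  define pick where "pick xs = (SOME z::'a. minimal_right_ideal (range ((*) z)) \<and> z \<notin> right_span xs)" for xs
  have pick: "minimal_right_ideal (range ((*) (pick xs))) \<and> pick xs \<notin> right_span xs" if "good xs" for xs
    unfolding pick_def
    using someI_ex[OF exists_minimal_generator_outside_span[OF split not_socle that[unfolded good_def]]] .
  have "good (greedy_list pick n)" for n by (induction n) (auto simp: good_def pick[unfolded good_def])
  define x where "x k = pick (greedy_list pick k)" for k
  have greedy_x: "greedy_list pick n = map x [0..<n]" for n unfolding x_def by (rule greedy_list_eq_map)
  have x_new: "x n \<notin> right_span (map x [0..<n])" for n
  proof -
    have "x n \<notin> right_span (greedy_list pick n)"
      using pick[OF \<open>good (greedy_list pick n)\<close>] by (simp add: x_def)
    then show ?thesis unfolding greedy_x .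
  qed
  obtain S r where S: "finite S" "\<forall>m. (\<Sum>k\<in>S. x k * r k) * x m = x m"
    using split unfolding countably_generated_right_ideals_split_def by blast
  define N where "N = Suc (Max (insert 0 S))"
  have SN: "S \<subseteq> {..<N}" unfolding N_def using S(1) by (auto simp: less_Suc_eq_le)
  define s where "s k = (if k \<in> S then r k * x N else 0)" for k
  have "x N = (\<Sum>k\<in>S. x k * r k) * x N" using S(2) by simp
  also have "\<dots> = (\<Sum>k<N. x k * s k)"
    unfolding s_def sum_distrib_right
    by (rule sum.mono_neutral_cong_left) (use S SN in \<open>auto simp: mult.assoc\<close>)
  also have "\<dots> = (\<Sum>k<length (map x [0..<N]). map x [0..<N] ! k * s k)"
    by (intro sum.cong) (auto simp del: upt_Suc)
  finally have "x N \<in> right_span (map x [0..<N])" unfolding right_span_def by blast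
  then show False using x_new by blast
qed

section \<open>SSP column finite matrix rings force semisimplicity\<close>

definition column_multiples :: "'l set \<Rightarrow> 'l \<Rightarrow> ('l \<Rightarrow> 'a::ring_1) \<Rightarrow> ('l \<Rightarrow> 'l \<Rightarrow> 'a) set" where
  "column_multiples \<Lambda> p c = {Y \<in> cfm \<Lambda>. \<forall>i k. Y i k = Y i p * c k}"

definition zero_column :: "'l set \<Rightarrow> 'l \<Rightarrow> ('l \<Rightarrow> 'l \<Rightarrow> 'a::ring_1) set" where
  "zero_column \<Lambda> p = {Y \<in> cfm \<Lambda>. \<forall>i. Y i p = 0}"

definition row_matrix :: "'l \<Rightarrow> ('l \<Rightarrow> 'a::ring_1) \<Rightarrow> 'l \<Rightarrow> 'l \<Rightarrow> 'a" where
  "row_matrix p v = (\<lambda>i k. if i = p then v k else 0)"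

lemma column_multiplesD:
  assumes "Y \<in> column_multiples \<Lambda> p c"
  shows "Y \<in> cfm \<Lambda>" and "Y i k = Y i p * c k"
  using assms unfolding column_multiples_def by blast+

lemma cfm_mult_column_multiples:
  assumes Y: "Y \<in> column_multiples \<Lambda> p c" and R: "R \<in> cfm \<Lambda>"
  shows "cfm_mult \<Lambda> R Y \<in> column_multiples \<Lambda> p c"
proof -
  note YC = column_multiplesD(1)[OF Y] and Yc = column_multiplesD(2)[OF Y]
  let ?J = "{j\<in>\<Lambda>. Y j p \<noteq> 0}"
  have "cfm_mult \<Lambda> R Y i k = cfm_mult \<Lambda> R Y i p * c k" for i k
  proof -
    have "cfm_mult \<Lambda> R Y i k = (\<Sum>j\<in>?J. R i j * Y j k)"
      using cfm_finite_column[OF YC] by (rule cfm_mult_eq_sum[OF YC]) (auto simp: Yc[of _ k])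
    also have "\<dots> = (\<Sum>j\<in>?J. R i j * Y j p) * c k"
      by (simp only: Yc[of _ k] sum_distrib_right mult.assoc)
    finally show ?thesis by (simp only: cfm_mult_def)
  qed
  then show ?thesis unfolding column_multiples_def using cfm_mult_closed[OF R YC] by blast
qed

lemma column_multiples_add:
  assumes "X \<in> column_multiples \<Lambda> p c" "Y \<in> column_multiples \<Lambda> p c"
  shows "X + Y \<in> column_multiples \<Lambda> p c"
proof -
  have "(X + Y) i k = (X + Y) i p * c k" for i k
    by (simp only: plus_fun_apply column_multiplesD(2)[OF assms(1), of i k]
        column_multiplesD(2)[OF assms(2), of i k] distrib_right)
  then show ?thesis
    unfolding column_multiples_def using cfm_add_closed column_multiplesD(1)[OF assms(1)] column_multiplesD(1)[OF assms(2)]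
    by blast
qed

lemma left_ideal_column_multiples:
  "right_ideal_in (cfm \<Lambda>) (+) 0 (\<lambda>x y. cfm_mult \<Lambda> y x) (column_multiples \<Lambda> p c)"
  unfolding right_ideal_in_def
proof (intro conjI ballI)
  show "column_multiples \<Lambda> p c \<subseteq> cfm \<Lambda>" unfolding column_multiples_def by blast
  show "0 \<in> column_multiples \<Lambda> p c" unfolding column_multiples_def using cfm_zero_closed by simp
  show "X + Y \<in> column_multiples \<Lambda> p c"
    if "X \<in> column_multiples \<Lambda> p c" "Y \<in> column_multiples \<Lambda> p c" for X Y
    using column_multiples_add that .
  show "cfm_mult \<Lambda> R X \<in> column_multiples \<Lambda> p c" if "X \<in> column_multiples \<Lambda> p c" "R \<in> cfm \<Lambda>" for X R
    using cfm_mult_column_multiples that .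
qed

lemma left_ideal_zero_column:
  "right_ideal_in (cfm \<Lambda>) (+) 0 (\<lambda>x y. cfm_mult \<Lambda> y x) (zero_column \<Lambda> p)"
  unfolding right_ideal_in_def zero_column_def
  by (auto simp: cfm_zero_closed cfm_add_closed cfm_mult_closed) (simp add: cfm_mult_def)

lemma column_multiples_inter_zero_column: "column_multiples \<Lambda> p c \<inter> zero_column \<Lambda> p = {0}"
proof
  show "column_multiples \<Lambda> p c \<inter> zero_column \<Lambda> p \<subseteq> {0}"
  proof
    fix Y assume Y: "Y \<in> column_multiples \<Lambda> p c \<inter> zero_column \<Lambda> p"
    then have "Y i p = 0" for i unfolding zero_column_def by blast
    then have "Y i k = 0" for i k using column_multiplesD(2)[OF IntD1[OF Y], of i k] by simp
    then show "Y \<in> {0}" by (simp add: fun_eq_iff)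
  qed
  show "{0} \<subseteq> column_multiples \<Lambda> p c \<inter> zero_column \<Lambda> p"
    using cfm_zero_closed by (simp add: column_multiples_def zero_column_def)
qed

lemma column_multiples_plus_zero_column:
  fixes c :: "'l \<Rightarrow> 'a::ring_1"
  assumes cp: "c p = 1" and c_out: "\<And>k. k \<notin> \<Lambda> \<Longrightarrow> c k = 0"
  shows "set_plus_in (+) (column_multiples \<Lambda> p c) (zero_column \<Lambda> p) = cfm \<Lambda>"
proof (intro equalityI subsetI)
  fix Y assume "Y \<in> set_plus_in (+) (column_multiples \<Lambda> p c) (zero_column \<Lambda> p)"
  then show "Y \<in> cfm \<Lambda>"
    unfolding set_plus_in_def column_multiples_def zero_column_def using cfm_add_closed by blast
next
  fix Y :: "'l \<Rightarrow> 'l \<Rightarrow> 'a" assume Y: "Y \<in> cfm \<Lambda>"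
  define Y1 where "Y1 = (\<lambda>i k. Y i p * c k)"
  have "Y1 \<in> cfm \<Lambda>"
  proof (rule cfmI)
    fix i k assume "i \<notin> \<Lambda> \<or> k \<notin> \<Lambda>"
    then show "Y1 i k = 0" unfolding Y1_def using cfm_outside[OF Y, of i p] c_out by auto
  next
    fix k
    have "{i\<in>\<Lambda>. Y1 i k \<noteq> 0} \<subseteq> {i\<in>\<Lambda>. Y i p \<noteq> 0}" unfolding Y1_def by auto
    then show "finite {i\<in>\<Lambda>. Y1 i k \<noteq> 0}" using cfm_finite_column[OF Y] by (rule finite_subset)
  qed
  then have "Y1 \<in> column_multiples \<Lambda> p c" unfolding column_multiples_def Y1_def using cp by simp
  moreover have "Y - Y1 \<in> zero_column \<Lambda> p"
    using cfm_add_closed[OF Y cfm_uminus_closed[OF \<open>Y1 \<in> cfm \<Lambda>\<close>]] cp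
    unfolding zero_column_def Y1_def by simp
  moreover have "Y = Y1 + (Y - Y1)" by simp
  ultimately show "Y \<in> set_plus_in (+) (column_multiples \<Lambda> p c) (zero_column \<Lambda> p)"
    unfolding set_plus_in_def by blast
qed

lemma left_summand_column_multiples:
  fixes c :: "'l \<Rightarrow> 'a::ring_1"
  assumes "c p = 1" and "\<And>k. k \<notin> \<Lambda> \<Longrightarrow> c k = 0"
  shows "right_summand_in (cfm \<Lambda>) (+) 0 (\<lambda>x y. cfm_mult \<Lambda> y x) (column_multiples \<Lambda> p c)"
  unfolding right_summand_in_def
proof (intro conjI exI)
  show "set_plus_in (+) (column_multiples \<Lambda> p c) (zero_column \<Lambda> p) = cfm \<Lambda>"
    using assms by (rule column_multiples_plus_zero_column)
qed (rule left_ideal_column_multiples left_ideal_zero_column column_multiples_inter_zero_column)+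

lemma row_matrix_in_column_multiples:
  assumes p: "p \<in> \<Lambda>" and cp: "c p = 1" and c_out: "\<And>k. k \<notin> \<Lambda> \<Longrightarrow> c k = 0"
  shows "row_matrix p (\<lambda>k. r * c k) \<in> column_multiples \<Lambda> p c"
  unfolding column_multiples_def
proof (intro CollectI conjI allI)
  show "row_matrix p (\<lambda>k. r * c k) \<in> cfm \<Lambda>"
  proof (rule cfmI)
    fix k
    have "{i\<in>\<Lambda>. row_matrix p (\<lambda>k. r * c k) i k \<noteq> 0} \<subseteq> {p}" by (auto simp: row_matrix_def)
    then show "finite {i\<in>\<Lambda>. row_matrix p (\<lambda>k. r * c k) i k \<noteq> 0}" by (rule finite_subset) simp
  qed (use p c_out in \<open>auto simp: row_matrix_def\<close>)
qed (simp add: row_matrix_def cp)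

lemma finite_left_unit_of_row_identity:
  fixes x :: "nat \<Rightarrow> 'a::ring_1"
  assumes jn: "inj jn" and eps: "\<epsilon> \<in> cfm \<Lambda>" and e: "e \<in> cfm \<Lambda>"
    and eps_col: "\<And>j m. \<epsilon> j (jn m) = e j p * x m"
    and X_row: "\<And>j. X p j = (if j \<in> range jn then x (inv jn j) else 0)"
    and X_eps: "cfm_mult \<Lambda> X \<epsilon> = X"
  shows "\<exists>S r. finite S \<and> (\<forall>m. (\<Sum>k\<in>S. x k * r k) * x m = x m)"
proof -
  define V where "V = {j\<in>\<Lambda>. e j p \<noteq> 0}"
  have V: "finite V" unfolding V_def using cfm_finite_column[OF e] .
  have unit_row: "(\<Sum>j\<in>V. X p j * e j p) * x m = x m" for m
  proof -
    have "(\<Sum>j\<in>V. X p j * e j p) * x m = (\<Sum>j\<in>V. X p j * \<epsilon> j (jn m))"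
      by (simp add: eps_col sum_distrib_right mult.assoc)
    also have "\<dots> = cfm_mult \<Lambda> X \<epsilon> p (jn m)"
      by (rule cfm_mult_eq_sum[symmetric, OF eps V]) (auto simp: V_def eps_col)
    also have "\<dots> = x m" using X_eps X_row jn by simp
    finally show ?thesis .
  qed
  have reindex: "(\<Sum>j\<in>V. X p j * e j p) = (\<Sum>k\<in>jn -` V. x k * e (jn k) p)"
  proof -
    have "(\<Sum>j\<in>V. X p j * e j p) = (\<Sum>j\<in>jn ` (jn -` V). X p j * e j p)"
      by (rule sum.mono_neutral_right) (auto simp: V X_row)
    also have "\<dots> = (\<Sum>k\<in>jn -` V. x k * e (jn k) p)"
      by (subst sum.reindex) (auto simp: X_row jn intro: inj_on_subset[OF jn])
    finally show ?thesis .
  qed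
  show ?thesis
  proof (rule exI[of _ "jn -` V"], rule exI[of _ "\<lambda>k. e (jn k) p"], intro conjI allI)
    show "finite (jn -` V)" using V jn by (simp add: finite_vimageI)
    show "(\<Sum>k\<in>jn -` V. x k * e (jn k) p) * x m = x m" for m using unit_row[of m] by (simp only: reindex)
  qed
qed

text \<open>Row p of X carries x m in column jn m and vanishes in column p. X lies in the left summand
  L1 + L2, so X = X \<epsilon> for its right unit \<epsilon>, and row p of this identity is the required
  finite left unit for the x m.\<close>
lemma cfm_left_SSP_imp_split:
  assumes inf: "infinite (\<Lambda> :: 'l set)"
    and SSP: "left_SSP_in (cfm \<Lambda> :: ('l \<Rightarrow> 'l \<Rightarrow> 'a::ring_1) set) (+) 0 (cfm_mult \<Lambda>)"
  shows "countably_generated_right_ideals_split TYPE('a)"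
  unfolding countably_generated_right_ideals_split_def
proof
  fix x :: "nat \<Rightarrow> 'a"
  interpret opp: ring_on "cfm \<Lambda> :: ('l \<Rightarrow> 'l \<Rightarrow> 'a) set" "\<lambda>x y. cfm_mult \<Lambda> y x" "cfm_one \<Lambda>"
    by (rule ring_on.opposite[OF ring_on_cfm])
  obtain p where p: "p \<in> \<Lambda>" using inf by (metis finite.emptyI ex_in_conv)
  obtain jn :: "nat \<Rightarrow> 'l" where jn: "inj jn" "range jn \<subseteq> \<Lambda> - {p}"
    using inf infinite_countable_subset[of "\<Lambda> - {p}"] by auto
  define c1 where "c1 k = (if k = p then 1 else 0 :: 'a)" for k
  define c2 where "c2 k = (if k = p then 1 else if k \<in> range jn then x (inv jn k) else 0)" for k
  let ?L1 = "column_multiples \<Lambda> p c1" and ?L2 = "column_multiples \<Lambda> p c2"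
  let ?H = "set_plus_in (+) ?L1 ?L2"
  have c: "c1 p = 1" "c2 p = 1" "\<And>k. k \<notin> \<Lambda> \<Longrightarrow> c1 k = 0" "\<And>k. k \<notin> \<Lambda> \<Longrightarrow> c2 k = 0"
    using p jn(2) by (auto simp: c1_def c2_def)
  then have "right_summand_in (cfm \<Lambda>) (+) 0 (\<lambda>x y. cfm_mult \<Lambda> y x) ?H"
    using SSP[unfolded left_SSP_in_def right_SSP_in_def, rule_format]
      left_summand_column_multiples[where c = c1 and p = p, OF c(1,3)]
      left_summand_column_multiples[where c = c2 and p = p, OF c(2,4)]
    by blast
  then obtain \<epsilon> where "\<epsilon> \<in> ?H" and unit: "\<And>X. X \<in> ?H \<Longrightarrow> cfm_mult \<Lambda> X \<epsilon> = X"
    using opp.right_summand_left_unit by blast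
  then obtain e1 e2 where e1: "e1 \<in> ?L1" and e2: "e2 \<in> ?L2" and eps: "\<epsilon> = e1 + e2"
    unfolding set_plus_in_def by blast
  have e2_C: "e2 \<in> cfm \<Lambda>" and eps_C: "\<epsilon> \<in> cfm \<Lambda>"
    using cfm_add_closed column_multiplesD(1)[OF e1] column_multiplesD(1)[OF e2] unfolding eps by blast+
  have "jn m \<noteq> p" for m using jn(2) by auto
  then have eps_col: "\<epsilon> j (jn m) = e2 j p * x m" for j m
    using column_multiplesD(2)[OF e1, of j "jn m"] column_multiplesD(2)[OF e2, of j "jn m"] jn(1)
    by (simp add: eps c1_def c2_def)
  define X where "X = row_matrix p (\<lambda>k. c2 k - c1 k)"
  have X_row: "X p j = (if j \<in> range jn then x (inv jn j) else 0)" for j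
    using jn(2) by (auto simp: X_def row_matrix_def c1_def c2_def)
  have "X = row_matrix p (\<lambda>k. (- 1) * c1 k) + row_matrix p (\<lambda>k. 1 * c2 k)"
    by (auto simp: X_def row_matrix_def fun_eq_iff)
  then have "X \<in> ?H" unfolding set_plus_in_def
    using row_matrix_in_column_multiples[where c = c1, OF p c(1,3)]
      row_matrix_in_column_multiples[where c = c2, OF p c(2,4)]
    by blast
  then show "\<exists>S r. finite S \<and> (\<forall>m. (\<Sum>k\<in>S. x k * r k) * x m = x m)"
    using finite_left_unit_of_row_identity[where x = x and p = p and X = X, OF jn(1) eps_C e2_C eps_col X_row]
      unit
    by blast
qed

lemma CFM_SSP_imp_semisimple:
  assumes "infinite (\<Lambda> :: 'l set)" and "CFM_SSP TYPE('a::ring_1) \<Lambda>"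
  shows "semisimple_ring TYPE('a)"
proof -
  have "left_SSP_in (cfm \<Lambda> :: ('l \<Rightarrow> 'l \<Rightarrow> 'a) set) (+) 0 (cfm_mult \<Lambda>)"
    using assms(2) unfolding CFM_SSP_def SSP_in_def cfm_add_eq cfm_zero_eq by blast
  then show ?thesis using split_imp_semisimple cfm_left_SSP_imp_split[OF assms(1)] by blast
qed

theorem theorem2p17:
  shows "(semisimple_ring TYPE('a::ring_1) \<longleftrightarrow> CFM_SSP TYPE('a) (UNIV :: nat set))
       \<and> ((\<exists>\<Lambda> :: 'l set. infinite \<Lambda> \<and> CFM_SSP TYPE('a) \<Lambda>) \<longrightarrow> semisimple_ring TYPE('a))
       \<and> (semisimple_ring TYPE('a) \<longrightarrow> (\<forall>\<Lambda> :: 'l set. infinite \<Lambda> \<longrightarrow> CFM_SSP TYPE('a) \<Lambda>))"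
proof (intro conjI impI allI iffI)
  assume "semisimple_ring TYPE('a)"
  then show "CFM_SSP TYPE('a) (UNIV :: nat set)" by (rule semisimple_imp_CFM_SSP)
next
  assume "CFM_SSP TYPE('a) (UNIV :: nat set)"
  then show "semisimple_ring TYPE('a)" by (rule CFM_SSP_imp_semisimple[OF infinite_UNIV_nat])
next
  assume "\<exists>\<Lambda> :: 'l set. infinite \<Lambda> \<and> CFM_SSP TYPE('a) \<Lambda>"
  then show "semisimple_ring TYPE('a)" using CFM_SSP_imp_semisimple by blast
next
  fix \<Lambda> :: "'l set"
  assume "semisimple_ring TYPE('a)"
  then show "CFM_SSP TYPE('a) \<Lambda>" by (rule semisimple_imp_CFM_SSP)
qed

end
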